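(* Let $h\colon R\to S$ be a flat morphism of commutative rings, $\mathfrak{a}\subseteq R$ an ideal, and $\kappa$ a cardinal such that infinitely many powers of $\mathfrak{a}$ have generating sets of cardinality at most $\kappa$. Let $M$ be an $R$-module such that the canonical morphism $\varepsilon_{S,M,\kappa}\colon S\otimes_R(M^\kappa)\to(S\otimes_RM)^\kappa$ is injective. Then the canonical monomorphism $\rho^h_\mathfrak{a}(M)\colon S\otimes_R\Gamma_\mathfrak{a}(M)\to\Gamma_{\mathfrak{a}S}(S\otimes_RM)$ is an isomorphism.
   Context: $\Gamma_\mathfrak{a}(M)=\{x\in M\mid \exists n\in\mathbb{N}:\mathfrak{a}^n\subseteq(0:_Rx)\}$; $\mathfrak{a}S$ denotes the ideal of $S$ generated by $h(\mathfrak{a})$. $\varepsilon_{S,M,\kappa}$ sends $s\otimes(m_i)_i$ to $(s\otimes m_i)_i$. Since $h$ is flat, the map $S\otimes_R\Gamma_\mathfrak{a}(M)\to S\otimes_RM$ is injective and its image lies in $\Gamma_{\mathfrak{a}S}(S\otimes_RM)$; $\rho^h_\mathfrak{a}(M)$ is the resulting injective $S$-linear map $s\otimes m\mapsto s\otimes m$. *)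

theory Defs
  imports "HOL-Algebra.Algebra"
begin

text \<open>Concrete model of the base change S \<otimes>_R N of an R-module N along a ring
  morphism h : R \<rightarrow> S: the free S-module on the carrier of N (finitely supported
  functions carrier N \<rightarrow> carrier S, zero outside carrier N) modulo the S-submodule
  generated by the bilinearity relations.  The class of the function
  fdelta S m s is the elementary tensor s \<otimes> m.\<close>

definition fadd :: "('s, 'c) ring_scheme \<Rightarrow> ('n \<Rightarrow> 's) \<Rightarrow> ('n \<Rightarrow> 's) \<Rightarrow> ('n \<Rightarrow> 's)" where
  "fadd S f g = (\<lambda>x. f x \<oplus>\<^bsub>S\<^esub> g x)"

definition fneg :: "('s, 'c) ring_scheme \<Rightarrow> ('n \<Rightarrow> 's) \<Rightarrow> ('n \<Rightarrow> 's)" where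
  "fneg S f = (\<lambda>x. \<ominus>\<^bsub>S\<^esub> f x)"

definition fminus :: "('s, 'c) ring_scheme \<Rightarrow> ('n \<Rightarrow> 's) \<Rightarrow> ('n \<Rightarrow> 's) \<Rightarrow> ('n \<Rightarrow> 's)" where
  "fminus S f g = fadd S f (fneg S g)"

definition fsmult :: "('s, 'c) ring_scheme \<Rightarrow> 's \<Rightarrow> ('n \<Rightarrow> 's) \<Rightarrow> ('n \<Rightarrow> 's)" where
  "fsmult S s f = (\<lambda>x. s \<otimes>\<^bsub>S\<^esub> f x)"

definition fdelta :: "('s, 'c) ring_scheme \<Rightarrow> 'n \<Rightarrow> 's \<Rightarrow> ('n \<Rightarrow> 's)" where
  "fdelta S m s = (\<lambda>x. if x = m then s else \<zero>\<^bsub>S\<^esub>)"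

definition fsupp :: "('s, 'c) ring_scheme \<Rightarrow> ('n \<Rightarrow> 's) \<Rightarrow> 'n set" where
  "fsupp S f = {x. f x \<noteq> \<zero>\<^bsub>S\<^esub>}"

definition free_on :: "('s, 'c) ring_scheme \<Rightarrow> ('r, 'n, 'd) module_scheme \<Rightarrow> ('n \<Rightarrow> 's) set" where
  "free_on S N = {f. (\<forall>x. f x \<in> carrier S) \<and> (\<forall>x. x \<notin> carrier N \<longrightarrow> f x = \<zero>\<^bsub>S\<^esub>)
                     \<and> finite (fsupp S f)}"

inductive_set tensor_rel :: "('r, 'a) ring_scheme \<Rightarrow> ('s, 'c) ring_scheme \<Rightarrow> ('r \<Rightarrow> 's)
      \<Rightarrow> ('r, 'n, 'd) module_scheme \<Rightarrow> ('n \<Rightarrow> 's) set"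
  for R S h N where
    zero: "(\<lambda>x. \<zero>\<^bsub>S\<^esub>) \<in> tensor_rel R S h N"
  | add_rel: "\<lbrakk> k \<in> tensor_rel R S h N; s \<in> carrier S; m \<in> carrier N; m' \<in> carrier N \<rbrakk> \<Longrightarrow>
      fadd S k (fsmult S s (fminus S (fminus S (fdelta S (m \<oplus>\<^bsub>N\<^esub> m') \<one>\<^bsub>S\<^esub>)
                                         (fdelta S m \<one>\<^bsub>S\<^esub>)) (fdelta S m' \<one>\<^bsub>S\<^esub>)))
      \<in> tensor_rel R S h N"
  | smult_rel: "\<lbrakk> k \<in> tensor_rel R S h N; s \<in> carrier S; r \<in> carrier R; m \<in> carrier N \<rbrakk> \<Longrightarrow>
      fadd S k (fsmult S s (fminus S (fdelta S (r \<odot>\<^bsub>N\<^esub> m) \<one>\<^bsub>S\<^esub>) (fdelta S m (h r))))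
      \<in> tensor_rel R S h N"

definition tensor_eq :: "('r, 'a) ring_scheme \<Rightarrow> ('s, 'c) ring_scheme \<Rightarrow> ('r \<Rightarrow> 's)
      \<Rightarrow> ('r, 'n, 'd) module_scheme \<Rightarrow> ('n \<Rightarrow> 's) \<Rightarrow> ('n \<Rightarrow> 's) \<Rightarrow> bool" where
  "tensor_eq R S h N f g \<longleftrightarrow> fminus S f g \<in> tensor_rel R S h N"

primrec ideal_pow :: "('r, 'a) ring_scheme \<Rightarrow> 'r set \<Rightarrow> nat \<Rightarrow> 'r set" where
  "ideal_pow R I 0 = carrier R"
| "ideal_pow R I (Suc n) = ideal_prod R I (ideal_pow R I n)"

definition torsion :: "('r, 'a) ring_scheme \<Rightarrow> 'r set \<Rightarrow> ('r, 'n, 'd) module_scheme \<Rightarrow> 'n set" where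
  "torsion R I M = {x \<in> carrier M. \<exists>n. \<forall>r \<in> ideal_pow R I n. r \<odot>\<^bsub>M\<^esub> x = \<zero>\<^bsub>M\<^esub>}"

definition tensor_torsion :: "('r, 'a) ring_scheme \<Rightarrow> ('s, 'c) ring_scheme \<Rightarrow> ('r \<Rightarrow> 's)
      \<Rightarrow> ('r, 'n, 'd) module_scheme \<Rightarrow> 's set \<Rightarrow> ('n \<Rightarrow> 's) set" where
  "tensor_torsion R S h M J = {f \<in> free_on S M. \<exists>n. \<forall>s \<in> ideal_pow S J n.
      tensor_eq R S h M (fsmult S s f) (\<lambda>x. \<zero>\<^bsub>S\<^esub>)}"

definition prod_module :: "('r, 'n, 'd) module_scheme \<Rightarrow> 'i set \<Rightarrow> ('r, 'i \<Rightarrow> 'n) module" where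
  "prod_module M I = \<lparr> carrier = {f \<in> extensional I. \<forall>i \<in> I. f i \<in> carrier M},
     monoid.mult = (\<lambda>f g. undefined), one = undefined,
     ring.zero = (\<lambda>i \<in> I. \<zero>\<^bsub>M\<^esub>),
     ring.add = (\<lambda>f g. \<lambda>i \<in> I. f i \<oplus>\<^bsub>M\<^esub> g i),
     module.smult = (\<lambda>r f. \<lambda>i \<in> I. r \<odot>\<^bsub>M\<^esub> f i) \<rparr>"

text \<open>Component i of \<epsilon>_{S,M,I} on representatives:
  (s \<otimes> (m_j)_j) \<mapsto> s \<otimes> m_i.\<close>
definition push_comp :: "('s, 'c) ring_scheme \<Rightarrow> 'i \<Rightarrow> (('i \<Rightarrow> 'n) \<Rightarrow> 's) \<Rightarrow> ('n \<Rightarrow> 's)" where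
  "push_comp S i f = (\<lambda>m. finsum S f {x \<in> fsupp S f. x i = m})"

definition eps_injective :: "('r, 'a) ring_scheme \<Rightarrow> ('s, 'c) ring_scheme \<Rightarrow> ('r \<Rightarrow> 's)
      \<Rightarrow> ('r, 'n, 'd) module_scheme \<Rightarrow> 'i set \<Rightarrow> bool" where
  "eps_injective R S h M I \<longleftrightarrow>
    (\<forall>f \<in> free_on S (prod_module M I). \<forall>g \<in> free_on S (prod_module M I).
       (\<forall>i \<in> I. tensor_eq R S h M (push_comp S i f) (push_comp S i g))
       \<longrightarrow> tensor_eq R S h (prod_module M I) f g)"

definition ideal_module :: "('r, 'a) ring_scheme \<Rightarrow> 'r set \<Rightarrow> ('r, 'r) module" where
  "ideal_module R I = \<lparr> carrier = I, monoid.mult = monoid.mult R, one = \<one>\<^bsub>R\<^esub>, ring.zero = \<zero>\<^bsub>R\<^esub>,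
     ring.add = ring.add R, module.smult = monoid.mult R \<rparr>"

text \<open>Flatness of h (ideal criterion): for every ideal I of R the canonical map
  S \<otimes>_R I \<rightarrow> S \<otimes>_R R = S, s \<otimes> x \<mapsto> s h(x), is injective.\<close>
definition flat_hom :: "('r, 'a) ring_scheme \<Rightarrow> ('s, 'c) ring_scheme \<Rightarrow> ('r \<Rightarrow> 's) \<Rightarrow> bool" where
  "flat_hom R S h \<longleftrightarrow> (\<forall>I. ideal I R \<longrightarrow>
     (\<forall>f \<in> free_on S (ideal_module R I).
        finsum S (\<lambda>x. f x \<otimes>\<^bsub>S\<^esub> h x) (fsupp S f) = \<zero>\<^bsub>S\<^esub>
        \<longrightarrow> tensor_eq R S h (ideal_module R I) f (\<lambda>x. \<zero>\<^bsub>S\<^esub>)))"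

definition card_le :: "'x set \<Rightarrow> 'i set \<Rightarrow> bool" where
  "card_le G I \<longleftrightarrow> (\<exists>g. inj_on g G \<and> g ` G \<subseteq> I)"

end

theory Submission
  imports Defs
begin

context abelian_monoid begin

lemma finsum_swap:
  assumes "finite A" "finite B" "\<And>a b. a \<in> A \<Longrightarrow> b \<in> B \<Longrightarrow> f a b \<in> carrier G"
  shows "(\<Oplus>a\<in>A. \<Oplus>b\<in>B. f a b) = (\<Oplus>b\<in>B. \<Oplus>a\<in>A. f a b)"
  using assms
proof (induction A rule: finite_induct)
  case (insert x F)
  have "(\<Oplus>a\<in>insert x F. \<Oplus>b\<in>B. f a b) = (\<Oplus>b\<in>B. f x b) \<oplus> (\<Oplus>b\<in>B. \<Oplus>a\<in>F. f a b)"
    using insert by (simp add: finsum_closed Pi_def)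
  also have "\<dots> = (\<Oplus>b\<in>B. f x b \<oplus> (\<Oplus>a\<in>F. f a b))"
    using insert by (subst finsum_addf) (auto intro!: finsum_closed)
  also have "\<dots> = (\<Oplus>b\<in>B. \<Oplus>a\<in>insert x F. f a b)"
    using insert by (intro finsum_cong') (auto simp: finsum_insert)
  finally show ?case .
qed (simp add: finsum_zero)

lemma finsum_fibers:
  assumes "finite V" "f \<in> V \<rightarrow> carrier G"
  shows "(\<Oplus>y\<in>g ` V. \<Oplus>x\<in>{x\<in>V. g x = y}. f x) = (\<Oplus>x\<in>V. f x)"
proof -
  have "V = (\<Union>y\<in>g ` V. {x\<in>V. g x = y})" by auto
  then have "(\<Oplus>x\<in>V. f x) = (\<Oplus>x\<in>(\<Union>y\<in>g ` V. {x\<in>V. g x = y}). f x)" by simp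
  also have "\<dots> = (\<Oplus>y\<in>g ` V. \<Oplus>x\<in>{x\<in>V. g x = y}. f x)"
    using assms by (intro add.finprod_UN_disjoint) (auto simp: pairwise_def disjnt_def)
  finally show ?thesis by simp
qed

lemma finsum_mono_neutral_left:
  assumes "finite B" "A \<subseteq> B" "f \<in> B \<rightarrow> carrier G" "\<And>x. x \<in> B - A \<Longrightarrow> f x = \<zero>"
  shows "finsum G f A = finsum G f B"
  using assms by (intro add.finprod_mono_neutral_cong_left) auto

lemma finsum_delta:
  assumes "finite B" "c \<in> carrier G"
  shows "(\<Oplus>x\<in>B. if x = a then c else \<zero>) = (if a \<in> B then c else \<zero>)"
proof (cases "a \<in> B")
  case True
  then show ?thesis using assms add.finprod_singleton_swap[of a B "\<lambda>_. c"] by auto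
next
  case False
  then have "(\<Oplus>x\<in>B. if x = a then c else \<zero>) = (\<Oplus>x\<in>B. \<zero>)"
    by (intro finsum_cong') auto
  then show ?thesis using False by (simp add: finsum_zero)
qed

lemma finsum_delta':
  assumes "finite B" "c \<in> carrier G"
  shows "(\<Oplus>x\<in>B. if a = x then c else \<zero>) = (if a \<in> B then c else \<zero>)"
  using finsum_delta[OF assms, of a] by (simp add: eq_commute)

lemma finsum_inter_filter:
  assumes "finite A" "f \<in> A \<rightarrow> carrier G"
  shows "finsum G f {x\<in>A. P x} = (\<Oplus>x\<in>A. if P x then f x else \<zero>)"
proof -
  have "finsum G f {x\<in>A. P x} = (\<Oplus>x\<in>{x\<in>A. P x}. if P x then f x else \<zero>)"
    using assms by (intro finsum_cong') auto
  also have "\<dots> = (\<Oplus>x\<in>A. if P x then f x else \<zero>)"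
    using assms by (intro finsum_mono_neutral_left) auto
  finally show ?thesis .
qed

lemma finsum_even_odd:
  fixes A B :: "nat set"
  assumes "finite A" "finite B" "\<And>p. p \<in> A \<Longrightarrow> f (2*p) \<in> carrier G" "\<And>q. q \<in> B \<Longrightarrow> f (2*q+1) \<in> carrier G"
  shows "finsum G f ((\<lambda>p. 2*p) ` A \<union> (\<lambda>q. 2*q+1) ` B)
       = (\<Oplus>p\<in>A. f (2*p)) \<oplus> (\<Oplus>q\<in>B. f (2*q+1))"
proof -
  have "(\<lambda>p. 2*p) ` A \<inter> (\<lambda>q. 2*q+1) ` B = {}" by auto presburger
  then have "finsum G f ((\<lambda>p. 2*p) ` A \<union> (\<lambda>q. 2*q+1) ` B)
      = finsum G f ((\<lambda>p. 2*p) ` A) \<oplus> finsum G f ((\<lambda>q. 2*q+1) ` B)"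
    using assms by (intro finsum_Un_disjoint) auto
  moreover have "inj_on (\<lambda>p::nat. 2*p) A" "inj_on (\<lambda>q::nat. 2*q+1) B"
    by (auto simp: inj_on_def)
  ultimately show ?thesis
    using assms(3,4) by (simp add: finsum_reindex image_subset_iff_funcset[symmetric] image_subset_iff)
qed

end

lemma (in abelian_group) finsum_negf:
  assumes "finite A" "f \<in> A \<rightarrow> carrier G"
  shows "(\<Oplus>x\<in>A. \<ominus> f x) = \<ominus> (\<Oplus>x\<in>A. f x)"
  using assms
proof (induction A rule: finite_induct)
  case empty
  then show ?case by (simp add: a_inv_def)
qed (simp_all add: finsum_closed minus_add Pi_def)

lemma (in module) finsum_smult_rdistr:
  assumes "finite A" "f \<in> A \<rightarrow> carrier R" "x \<in> carrier M"
  shows "finsum R f A \<odot>\<^bsub>M\<^esub> x = (\<Oplus>\<^bsub>M\<^esub>i\<in>A. f i \<odot>\<^bsub>M\<^esub> x)"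
  using assms
  by (induction A rule: finite_induct) (simp_all add: Pi_def smult_l_distr R.finsum_closed)

definition fcomb :: "('s, 'c) ring_scheme \<Rightarrow> ('d \<Rightarrow> 'n) \<Rightarrow> ('d \<Rightarrow> 's) \<Rightarrow> 'd set \<Rightarrow> ('n \<Rightarrow> 's)" where
  "fcomb S p s D = (\<lambda>x. \<Oplus>\<^bsub>S\<^esub>d\<in>D. fdelta S (p d) (s d) x)"

definition fpush :: "('s, 'c) ring_scheme \<Rightarrow> ('m \<Rightarrow> 'n) \<Rightarrow> ('m \<Rightarrow> 's) \<Rightarrow> ('n \<Rightarrow> 's)" where
  "fpush S \<phi> f = (\<lambda>y. finsum S f {x \<in> fsupp S f. \<phi> x = y})"

context ring begin

lemma fdelta_eq_smult: "s \<in> carrier R \<Longrightarrow> fdelta R m s x = s \<otimes> fdelta R m \<one> x"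
  by (simp add: fdelta_def)

lemma fdelta_closed [simp]: "s \<in> carrier R \<Longrightarrow> fdelta R m s x \<in> carrier R"
  by (simp add: fdelta_def)

end

context ring_hom_cring begin

lemma fcomb_closed [simp]: "s \<in> D \<rightarrow> carrier S \<Longrightarrow> fcomb S p s D x \<in> carrier S"
  unfolding fcomb_def by (intro S.finsum_closed) (auto simp: fdelta_def)

lemma tensor_rel_closed: "k \<in> tensor_rel R S h N \<Longrightarrow> k x \<in> carrier S"
  by (induction rule: tensor_rel.induct) (auto simp: fadd_def fsmult_def fminus_def fneg_def)

lemma tensor_rel_add:
  assumes "k2 \<in> tensor_rel R S h N" "k1 \<in> tensor_rel R S h N"
  shows "fadd S k1 k2 \<in> tensor_rel R S h N"
  using assms
proof induction
  case zero
  have "fadd S k1 (\<lambda>x. \<zero>\<^bsub>S\<^esub>) = k1"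
    using tensor_rel_closed[OF zero] by (auto simp: fadd_def)
  then show ?case using zero by simp
next
  case (add_rel k s m m')
  then show ?case
    using tensor_rel_closed[OF add_rel(1)] tensor_rel_closed[OF add_rel(6)]
      tensor_rel.add_rel[OF add_rel(5,2-4)]
    by (simp add: fadd_def fsmult_def fminus_def fneg_def S.a_ac)
next
  case (smult_rel k s r m)
  then show ?case
    using tensor_rel_closed[OF smult_rel(1)] tensor_rel_closed[OF smult_rel(6)]
      tensor_rel.smult_rel[OF smult_rel(5,2-4)]
    by (simp add: fadd_def fsmult_def fminus_def fneg_def S.a_ac)
qed

lemma tensor_rel_smult:
  assumes "k \<in> tensor_rel R S h N" "s \<in> carrier S"
  shows "fsmult S s k \<in> tensor_rel R S h N"
  using assms
proof induction
  case zero
  then show ?case using tensor_rel.zero by (simp add: fsmult_def)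
next
  case (add_rel k s' m m')
  then show ?case
    using tensor_rel_closed[OF add_rel(1)]
      tensor_rel.add_rel[OF add_rel(5)[OF add_rel(6)] S.m_closed[OF add_rel(6,2)] add_rel(3,4)]
    by (simp add: fadd_def fsmult_def fminus_def fneg_def S.r_distr S.m_assoc)
next
  case (smult_rel k s' r m)
  then show ?case
    using tensor_rel_closed[OF smult_rel(1)]
      tensor_rel.smult_rel[OF smult_rel(5)[OF smult_rel(6)] S.m_closed[OF smult_rel(6,2)] smult_rel(3,4)]
    by (simp add: fadd_def fsmult_def fminus_def fneg_def S.r_distr S.m_assoc)
qed

lemma tensor_rel_finsum:
  assumes "finite L" "\<And>l. l \<in> L \<Longrightarrow> g l \<in> tensor_rel R S h N"
  shows "(\<lambda>x. \<Oplus>\<^bsub>S\<^esub>l\<in>L. g l x) \<in> tensor_rel R S h N"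
  using assms
proof (induction L rule: finite_induct)
  case empty
  then show ?case by (simp add: tensor_rel.zero)
next
  case (insert a L)
  have "\<And>l x. l \<in> insert a L \<Longrightarrow> g l x \<in> carrier S"
    by (meson insert.prems tensor_rel_closed)
  with insert have "(\<lambda>x. \<Oplus>\<^bsub>S\<^esub>l\<in>insert a L. g l x) = fadd S (g a) (\<lambda>x. \<Oplus>\<^bsub>S\<^esub>l\<in>L. g l x)"
    by (auto simp: fadd_def Pi_def)
  then show ?case using insert by (simp add: tensor_rel_add)
qed

lemma tensor_eq_zero_iff:
  assumes "\<And>x. f x \<in> carrier S"
  shows "tensor_eq R S h N f (\<lambda>x. \<zero>\<^bsub>S\<^esub>) \<longleftrightarrow> f \<in> tensor_rel R S h N"
proof -
  have "fminus S f (\<lambda>x. \<zero>\<^bsub>S\<^esub>) = f" using assms by (simp add: fminus_def fadd_def fneg_def)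
  then show ?thesis by (simp add: tensor_eq_def)
qed

lemma tensor_eq_refl:
  assumes "\<And>x. f x \<in> carrier S"
  shows "tensor_eq R S h N f f"
proof -
  have "fminus S f f = (\<lambda>x. \<zero>\<^bsub>S\<^esub>)" using assms by (simp add: fminus_def fadd_def fneg_def S.r_neg)
  then show ?thesis by (simp add: tensor_eq_def tensor_rel.zero)
qed

lemma tensor_eq_sym:
  assumes "tensor_eq R S h N f g" "\<And>x. f x \<in> carrier S" "\<And>x. g x \<in> carrier S"
  shows "tensor_eq R S h N g f"
proof -
  have "fminus S g f = fsmult S (\<ominus>\<^bsub>S\<^esub> \<one>\<^bsub>S\<^esub>) (fminus S f g)"
    using assms(2,3) unfolding fminus_def fadd_def fneg_def fsmult_def by algebra
  then show ?thesis using assms(1) by (simp add: tensor_eq_def tensor_rel_smult)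
qed

lemma tensor_eq_trans:
  assumes "tensor_eq R S h N f g" "tensor_eq R S h N g k"
    and "\<And>x. f x \<in> carrier S" "\<And>x. g x \<in> carrier S" "\<And>x. k x \<in> carrier S"
  shows "tensor_eq R S h N f k"
proof -
  have "fminus S f k = fadd S (fminus S f g) (fminus S g k)"
    using assms(3-5) unfolding fminus_def fadd_def fneg_def by algebra
  then show ?thesis using assms(1,2) tensor_rel_add by (simp add: tensor_eq_def)
qed

lemma tensor_eq_fadd:
  assumes "tensor_eq R S h N f f'" "tensor_eq R S h N g g'"
    and "\<And>x. f x \<in> carrier S" "\<And>x. f' x \<in> carrier S" "\<And>x. g x \<in> carrier S" "\<And>x. g' x \<in> carrier S"
  shows "tensor_eq R S h N (fadd S f g) (fadd S f' g')"
proof -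
  have "fminus S (fadd S f g) (fadd S f' g') = fadd S (fminus S f f') (fminus S g g')"
    using assms(3-6) unfolding fminus_def fadd_def fneg_def by algebra
  then show ?thesis using assms(1,2) tensor_rel_add by (simp add: tensor_eq_def)
qed

lemma tensor_eq_fsmult:
  assumes "tensor_eq R S h N f g" "s \<in> carrier S" "\<And>x. f x \<in> carrier S" "\<And>x. g x \<in> carrier S"
  shows "tensor_eq R S h N (fsmult S s f) (fsmult S s g)"
proof -
  have "fminus S (fsmult S s f) (fsmult S s g) = fsmult S s (fminus S f g)"
    using assms(2-4) unfolding fminus_def fadd_def fneg_def fsmult_def by algebra
  then show ?thesis using assms(1,2) tensor_rel_smult by (simp add: tensor_eq_def)
qed

lemma tensor_eq_finsum:
  assumes "finite D" "\<And>d. d \<in> D \<Longrightarrow> tensor_eq R S h N (F d) (G d)"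
    and "\<And>d x. d \<in> D \<Longrightarrow> F d x \<in> carrier S" "\<And>d x. d \<in> D \<Longrightarrow> G d x \<in> carrier S"
  shows "tensor_eq R S h N (\<lambda>x. \<Oplus>\<^bsub>S\<^esub>d\<in>D. F d x) (\<lambda>x. \<Oplus>\<^bsub>S\<^esub>d\<in>D. G d x)"
  using assms
proof (induction D rule: finite_induct)
  case empty
  then show ?case by (simp add: tensor_eq_refl)
next
  case (insert a D)
  then have "tensor_eq R S h N (fadd S (F a) (\<lambda>x. \<Oplus>\<^bsub>S\<^esub>d\<in>D. F d x)) (fadd S (G a) (\<lambda>x. \<Oplus>\<^bsub>S\<^esub>d\<in>D. G d x))"
    by (intro tensor_eq_fadd) (auto intro!: S.finsum_closed)
  with insert show ?case by (simp add: fadd_def Pi_def)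
qed

lemma tensor_eq_fdelta_add:
  assumes "s \<in> carrier S" "m \<in> carrier N" "m' \<in> carrier N"
  shows "tensor_eq R S h N (fdelta S (m \<oplus>\<^bsub>N\<^esub> m') s) (fadd S (fdelta S m s) (fdelta S m' s))"
proof -
  have "fminus S (fdelta S (m \<oplus>\<^bsub>N\<^esub> m') s) (fadd S (fdelta S m s) (fdelta S m' s))
      = fadd S (\<lambda>x. \<zero>\<^bsub>S\<^esub>) (fsmult S s (fminus S (fminus S (fdelta S (m \<oplus>\<^bsub>N\<^esub> m') \<one>\<^bsub>S\<^esub>)
          (fdelta S m \<one>\<^bsub>S\<^esub>)) (fdelta S m' \<one>\<^bsub>S\<^esub>)))"
    using assms(1) unfolding fminus_def fadd_def fneg_def fsmult_def S.fdelta_eq_smult[OF assms(1)]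
    by (simp add: fdelta_def) algebra
  then show ?thesis using assms by (simp add: tensor_eq_def tensor_rel.add_rel tensor_rel.zero)
qed

lemma tensor_eq_fdelta_smult:
  assumes "s \<in> carrier S" "r \<in> carrier R" "m \<in> carrier N"
  shows "tensor_eq R S h N (fdelta S (r \<odot>\<^bsub>N\<^esub> m) s) (fdelta S m (s \<otimes>\<^bsub>S\<^esub> h r))"
proof -
  have "fminus S (fdelta S (r \<odot>\<^bsub>N\<^esub> m) s) (fdelta S m (s \<otimes>\<^bsub>S\<^esub> h r))
      = fadd S (\<lambda>x. \<zero>\<^bsub>S\<^esub>) (fsmult S s (fminus S (fdelta S (r \<odot>\<^bsub>N\<^esub> m) \<one>\<^bsub>S\<^esub>) (fdelta S m (h r))))"
    using assms(1,2)
    by (intro ext) (auto simp: fdelta_def fminus_def fadd_def fneg_def fsmult_def S.r_distr S.r_minus)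
  then show ?thesis using assms by (simp add: tensor_eq_def tensor_rel.smult_rel tensor_rel.zero)
qed

end

context ring_hom_cring begin

lemma tensor_eq_fdelta_zero:
  assumes "module R N" "s \<in> carrier S"
  shows "tensor_eq R S h N (fdelta S \<zero>\<^bsub>N\<^esub> s) (\<lambda>x. \<zero>\<^bsub>S\<^esub>)"
proof -
  interpret N: module R N by fact
  have "tensor_eq R S h N (fdelta S (\<zero>\<^bsub>N\<^esub> \<oplus>\<^bsub>N\<^esub> \<zero>\<^bsub>N\<^esub>) s) (fadd S (fdelta S \<zero>\<^bsub>N\<^esub> s) (fdelta S \<zero>\<^bsub>N\<^esub> s))"
    using assms(2) by (intro tensor_eq_fdelta_add) auto
  moreover have "fminus S (fdelta S \<zero>\<^bsub>N\<^esub> s) (\<lambda>x. \<zero>\<^bsub>S\<^esub>)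
      = fsmult S (\<ominus>\<^bsub>S\<^esub> \<one>\<^bsub>S\<^esub>) (fminus S (fdelta S \<zero>\<^bsub>N\<^esub> s) (fadd S (fdelta S \<zero>\<^bsub>N\<^esub> s) (fdelta S \<zero>\<^bsub>N\<^esub> s)))"
    using assms(2) unfolding fminus_def fadd_def fneg_def fsmult_def S.fdelta_eq_smult[OF assms(2)]
    by (simp add: fdelta_def) algebra
  ultimately show ?thesis by (simp add: tensor_eq_def tensor_rel_smult)
qed

lemma tensor_eq_fcomb_lincomb:
  assumes "module R N" "finite D" "p \<in> D \<rightarrow> carrier N" "k \<in> D \<rightarrow> carrier R"
  shows "tensor_eq R S h N (fcomb S p (\<lambda>d. h (k d)) D) (fdelta S (\<Oplus>\<^bsub>N\<^esub>d\<in>D. k d \<odot>\<^bsub>N\<^esub> p d) \<one>\<^bsub>S\<^esub>)"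
  using assms(2-4)
proof (induction D rule: finite_induct)
  case empty
  interpret N: module R N by fact
  show ?case
    using tensor_eq_sym[OF tensor_eq_fdelta_zero[OF assms(1) S.one_closed]] by (simp add: fcomb_def)
next
  case (insert a D)
  interpret N: module R N by fact
  let ?\<sigma> = "\<Oplus>\<^bsub>N\<^esub>d\<in>D. k d \<odot>\<^bsub>N\<^esub> p d"
  have ka: "k a \<in> carrier R" "p a \<in> carrier N" "k a \<odot>\<^bsub>N\<^esub> p a \<in> carrier N" "?\<sigma> \<in> carrier N"
    using insert.prems by (auto intro!: N.finsum_closed)
  have split: "fcomb S p (\<lambda>d. h (k d)) (insert a D) = fadd S (fdelta S (p a) (h (k a))) (fcomb S p (\<lambda>d. h (k d)) D)"
    unfolding fcomb_def fadd_def using insert.hyps insert.prems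
    by (intro ext, subst S.finsum_insert) (auto simp: Pi_def)
  have "tensor_eq R S h N (fadd S (fdelta S (p a) (h (k a))) (fcomb S p (\<lambda>d. h (k d)) D))
      (fadd S (fdelta S (k a \<odot>\<^bsub>N\<^esub> p a) \<one>\<^bsub>S\<^esub>) (fdelta S ?\<sigma> \<one>\<^bsub>S\<^esub>))"
  proof (rule tensor_eq_fadd)
    show "tensor_eq R S h N (fdelta S (p a) (h (k a))) (fdelta S (k a \<odot>\<^bsub>N\<^esub> p a) \<one>\<^bsub>S\<^esub>)"
    proof (rule tensor_eq_sym)
      show "tensor_eq R S h N (fdelta S (k a \<odot>\<^bsub>N\<^esub> p a) \<one>\<^bsub>S\<^esub>) (fdelta S (p a) (h (k a)))"
        using tensor_eq_fdelta_smult[OF S.one_closed ka(1,2)] ka(1) by simp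
    qed (use ka in simp_all)
    show "tensor_eq R S h N (fcomb S p (\<lambda>d. h (k d)) D) (fdelta S ?\<sigma> \<one>\<^bsub>S\<^esub>)"
      using insert.IH insert.prems by (simp add: Pi_def)
  qed (use insert.prems in \<open>simp_all add: Pi_def\<close>)
  moreover have "tensor_eq R S h N (fadd S (fdelta S (k a \<odot>\<^bsub>N\<^esub> p a) \<one>\<^bsub>S\<^esub>) (fdelta S ?\<sigma> \<one>\<^bsub>S\<^esub>))
      (fdelta S (k a \<odot>\<^bsub>N\<^esub> p a \<oplus>\<^bsub>N\<^esub> ?\<sigma>) \<one>\<^bsub>S\<^esub>)"
    using ka by (intro tensor_eq_sym[OF tensor_eq_fdelta_add]) (auto simp: fadd_def)
  ultimately have "tensor_eq R S h N (fcomb S p (\<lambda>d. h (k d)) (insert a D))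
      (fdelta S (k a \<odot>\<^bsub>N\<^esub> p a \<oplus>\<^bsub>N\<^esub> ?\<sigma>) \<one>\<^bsub>S\<^esub>)"
    unfolding split by (rule tensor_eq_trans) (use insert.prems in \<open>auto simp: fadd_def Pi_def\<close>)
  moreover have "(\<Oplus>\<^bsub>N\<^esub>d\<in>insert a D. k d \<odot>\<^bsub>N\<^esub> p d) = k a \<odot>\<^bsub>N\<^esub> p a \<oplus>\<^bsub>N\<^esub> ?\<sigma>"
    using insert by (intro N.finsum_insert) auto
  ultimately show ?case by simp
qed

end

context ring_hom_cring begin

lemma free_onD:
  assumes "f \<in> free_on S N"
  shows "f x \<in> carrier S" "x \<notin> carrier N \<Longrightarrow> f x = \<zero>\<^bsub>S\<^esub>" "finite (fsupp S f)" "fsupp S f \<subseteq> carrier N"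
  using assms unfolding free_on_def fsupp_def by auto

lemma fcomb_apply:
  assumes "finite D" "s \<in> D \<rightarrow> carrier S"
  shows "fcomb S p s D x = finsum S s {d \<in> D. p d = x}"
  using assms by (simp add: fcomb_def fdelta_def S.finsum_inter_filter eq_commute)

lemma fcomb_outside:
  assumes "finite D" "s \<in> D \<rightarrow> carrier S" "x \<notin> p ` D"
  shows "fcomb S p s D x = \<zero>\<^bsub>S\<^esub>"
proof -
  have empty: "{d \<in> D. p d = x} = {}" using assms(3) by auto
  show ?thesis unfolding fcomb_apply[OF assms(1,2)] empty by simp
qed

lemma fcomb_fsupp:
  assumes "\<And>x. f x \<in> carrier S" "finite (fsupp S f)"
  shows "fcomb S (\<lambda>x. x) f (fsupp S f) = f"
proof
  fix x
  have "fcomb S (\<lambda>x. x) f (fsupp S f) x = (\<Oplus>\<^bsub>S\<^esub>d\<in>fsupp S f. if x = d then f x else \<zero>\<^bsub>S\<^esub>)"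
    unfolding fcomb_def fdelta_def by (intro S.finsum_cong') (auto simp: assms(1))
  also have "\<dots> = f x"
    using assms by (simp add: S.finsum_delta' fsupp_def)
  finally show "fcomb S (\<lambda>x. x) f (fsupp S f) x = f x" .
qed

lemma fcomb_free_on:
  assumes "finite D" "p ` D \<subseteq> carrier N" "s \<in> D \<rightarrow> carrier S"
  shows "fcomb S p s D \<in> free_on S N"
proof -
  have zero: "fcomb S p s D x = \<zero>\<^bsub>S\<^esub>" if "x \<notin> p ` D" for x
    using that assms by (simp add: fcomb_outside)
  then have "fsupp S (fcomb S p s D) \<subseteq> p ` D" by (auto simp: fsupp_def)
  then have "finite (fsupp S (fcomb S p s D))"
    using assms(1) by (meson finite_imageI finite_subset)
  moreover have "fcomb S p s D x = \<zero>\<^bsub>S\<^esub>" if "x \<notin> carrier N" for x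
    using that assms(2) zero by blast
  ultimately show ?thesis
    using assms(3) unfolding free_on_def by simp
qed

lemma fpush_fcomb:
  assumes "finite D" "s \<in> D \<rightarrow> carrier S"
  shows "fpush S \<psi> (fcomb S p s D) = fcomb S (\<lambda>d. \<psi> (p d)) s D"
proof
  fix y
  let ?F = "fcomb S p s D"
  have F0: "?F x = \<zero>\<^bsub>S\<^esub>" if "x \<notin> p ` D" for x
    using that assms by (simp add: fcomb_outside)
  have "fpush S \<psi> ?F y = finsum S ?F {x \<in> p ` D. \<psi> x = y}"
    unfolding fpush_def using assms F0
    by (intro S.finsum_mono_neutral_left) (auto simp: fsupp_def)
  also have "{x \<in> p ` D. \<psi> x = y} = p ` {d \<in> D. \<psi> (p d) = y}" by auto
  also have "finsum S ?F (p ` {d \<in> D. \<psi> (p d) = y})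
      = (\<Oplus>\<^bsub>S\<^esub>x\<in>p ` {d \<in> D. \<psi> (p d) = y}. \<Oplus>\<^bsub>S\<^esub>d\<in>{d \<in> {d \<in> D. \<psi> (p d) = y}. p d = x}. s d)"
  proof (rule S.finsum_cong')
    fix x assume "x \<in> p ` {d \<in> D. \<psi> (p d) = y}"
    then have "{d \<in> D. p d = x} = {d \<in> {d \<in> D. \<psi> (p d) = y}. p d = x}" by auto
    then show "?F x = finsum S s {d \<in> {d \<in> D. \<psi> (p d) = y}. p d = x}"
      using assms by (simp add: fcomb_apply)
  qed (use assms in \<open>auto intro!: S.finsum_closed\<close>)
  also have "\<dots> = finsum S s {d \<in> D. \<psi> (p d) = y}"
    using assms by (intro S.finsum_fibers) auto
  also have "\<dots> = fcomb S (\<lambda>d. \<psi> (p d)) s D y"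
    using assms by (simp add: fcomb_apply)
  finally show "fpush S \<psi> ?F y = fcomb S (\<lambda>d. \<psi> (p d)) s D y" .
qed

lemma fpush_eq_fcomb:
  assumes "\<And>x. f x \<in> carrier S" "finite (fsupp S f)"
  shows "fpush S \<phi> f = fcomb S \<phi> f (fsupp S f)"
  using fpush_fcomb[OF assms(2), of f \<phi> "\<lambda>x. x"] assms by (simp add: fcomb_fsupp)

lemma fpush_free_on:
  assumes "f \<in> free_on S M" "\<phi> \<in> carrier M \<rightarrow> carrier N"
  shows "fpush S \<phi> f \<in> free_on S N"
proof -
  have "fpush S \<phi> f = fcomb S \<phi> f (fsupp S f)"
    using free_onD[OF assms(1)] by (intro fpush_eq_fcomb)
  also have "\<dots> \<in> free_on S N"
    using free_onD[OF assms(1)] assms(2) by (intro fcomb_free_on) auto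
  finally show ?thesis .
qed

lemma fpush_fpush:
  assumes "\<And>x. f x \<in> carrier S" "finite (fsupp S f)"
  shows "fpush S \<psi> (fpush S \<phi> f) = fpush S (\<lambda>x. \<psi> (\<phi> x)) f"
proof -
  have f: "f \<in> fsupp S f \<rightarrow> carrier S" using assms(1) by simp
  show ?thesis by (simp only: fpush_eq_fcomb[OF assms] fpush_fcomb[OF assms(2) f])
qed

end

definition lin_rels :: "('r, 'a) ring_scheme \<Rightarrow> ('r, 'n, 'd) module_scheme \<Rightarrow> ('n \<Rightarrow> 'r) set" where
  "lin_rels R N = {k. (\<forall>x. k x \<in> carrier R) \<and> (\<forall>x. x \<notin> carrier N \<longrightarrow> k x = \<zero>\<^bsub>R\<^esub>)
      \<and> finite (fsupp R k) \<and> (\<Oplus>\<^bsub>N\<^esub>x\<in>fsupp R k. k x \<odot>\<^bsub>N\<^esub> x) = \<zero>\<^bsub>N\<^esub>}"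

definition base_change_span :: "('s, 'c) ring_scheme \<Rightarrow> ('r \<Rightarrow> 's) \<Rightarrow> ('n \<Rightarrow> 'r) set \<Rightarrow> ('n \<Rightarrow> 's) set" where
  "base_change_span S h K = {f. \<exists>(L::nat set) u k. finite L \<and> u \<in> L \<rightarrow> carrier S \<and> (\<forall>l\<in>L. k l \<in> K)
      \<and> f = (\<lambda>x. \<Oplus>\<^bsub>S\<^esub>l\<in>L. u l \<otimes>\<^bsub>S\<^esub> h (k l x))}"

context module begin

lemma lin_relsD:
  assumes "k \<in> lin_rels R M"
  shows "k x \<in> carrier R" "x \<notin> carrier M \<Longrightarrow> k x = \<zero>" "finite (fsupp R k)" "fsupp R k \<subseteq> carrier M"
  using assms unfolding lin_rels_def fsupp_def by auto

lemma finsum_smult_mono_neutral: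
  assumes "finite B" "B \<subseteq> carrier M" "fsupp R k \<subseteq> B" "\<And>x. k x \<in> carrier R"
  shows "(\<Oplus>\<^bsub>M\<^esub>x\<in>fsupp R k. k x \<odot>\<^bsub>M\<^esub> x) = (\<Oplus>\<^bsub>M\<^esub>x\<in>B. k x \<odot>\<^bsub>M\<^esub> x)"
  using assms by (intro M.finsum_mono_neutral_left) (auto simp: fsupp_def)

lemma lin_rels_eval:
  assumes "k \<in> lin_rels R M" "finite B" "B \<subseteq> carrier M" "fsupp R k \<subseteq> B"
  shows "(\<Oplus>\<^bsub>M\<^esub>x\<in>B. k x \<odot>\<^bsub>M\<^esub> x) = \<zero>\<^bsub>M\<^esub>"
  using assms finsum_smult_mono_neutral[OF assms(2-4)] by (simp add: lin_rels_def)

lemma lin_relsI: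
  assumes "\<And>x. k x \<in> carrier R" "finite B" "B \<subseteq> carrier M" "\<And>x. x \<notin> B \<Longrightarrow> k x = \<zero>"
    and "(\<Oplus>\<^bsub>M\<^esub>x\<in>B. k x \<odot>\<^bsub>M\<^esub> x) = \<zero>\<^bsub>M\<^esub>"
  shows "k \<in> lin_rels R M"
proof -
  have supp: "fsupp R k \<subseteq> B" using assms(4) by (auto simp: fsupp_def)
  then have "finite (fsupp R k)" using assms(2) finite_subset by blast
  then show ?thesis
    using assms supp finsum_smult_mono_neutral[OF assms(2,3) supp assms(1)]
    unfolding lin_rels_def by auto
qed

lemma finsum_fdelta_smult:
  assumes "finite B" "B \<subseteq> carrier M" "p \<in> B" "c \<in> carrier R"
  shows "(\<Oplus>\<^bsub>M\<^esub>x\<in>B. fdelta R p c x \<odot>\<^bsub>M\<^esub> x) = c \<odot>\<^bsub>M\<^esub> p"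
proof -
  have "(\<Oplus>\<^bsub>M\<^esub>x\<in>B. fdelta R p c x \<odot>\<^bsub>M\<^esub> x) = (\<Oplus>\<^bsub>M\<^esub>x\<in>B. if x = p then c \<odot>\<^bsub>M\<^esub> p else \<zero>\<^bsub>M\<^esub>)"
    using assms by (intro M.finsum_cong') (auto simp: fdelta_def)
  moreover have "c \<odot>\<^bsub>M\<^esub> p \<in> carrier M" using assms by blast
  ultimately show ?thesis using assms by (simp add: M.finsum_delta)
qed

lemma finsum_fminus_smult:
  assumes "finite B" "B \<subseteq> carrier M" "\<And>x. k1 x \<in> carrier R" "\<And>x. k2 x \<in> carrier R"
  shows "(\<Oplus>\<^bsub>M\<^esub>x\<in>B. fminus R k1 k2 x \<odot>\<^bsub>M\<^esub> x)
       = (\<Oplus>\<^bsub>M\<^esub>x\<in>B. k1 x \<odot>\<^bsub>M\<^esub> x) \<ominus>\<^bsub>M\<^esub> (\<Oplus>\<^bsub>M\<^esub>x\<in>B. k2 x \<odot>\<^bsub>M\<^esub> x)"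
proof -
  have "(\<Oplus>\<^bsub>M\<^esub>x\<in>B. fminus R k1 k2 x \<odot>\<^bsub>M\<^esub> x)
      = (\<Oplus>\<^bsub>M\<^esub>x\<in>B. k1 x \<odot>\<^bsub>M\<^esub> x \<oplus>\<^bsub>M\<^esub> \<ominus>\<^bsub>M\<^esub> (k2 x \<odot>\<^bsub>M\<^esub> x))"
    using assms by (intro M.finsum_cong') (auto simp: fminus_def fadd_def fneg_def smult_l_distr smult_l_minus)
  also have "\<dots> = (\<Oplus>\<^bsub>M\<^esub>x\<in>B. k1 x \<odot>\<^bsub>M\<^esub> x) \<oplus>\<^bsub>M\<^esub> (\<Oplus>\<^bsub>M\<^esub>x\<in>B. \<ominus>\<^bsub>M\<^esub> (k2 x \<odot>\<^bsub>M\<^esub> x))"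
    using assms by (intro M.finsum_addf) auto
  also have "(\<Oplus>\<^bsub>M\<^esub>x\<in>B. \<ominus>\<^bsub>M\<^esub> (k2 x \<odot>\<^bsub>M\<^esub> x)) = \<ominus>\<^bsub>M\<^esub> (\<Oplus>\<^bsub>M\<^esub>x\<in>B. k2 x \<odot>\<^bsub>M\<^esub> x)"
    using assms by (intro M.finsum_negf) auto
  finally show ?thesis by (simp add: a_minus_def)
qed

lemma lin_rels_fdelta_add:
  assumes "m \<in> carrier M" "m' \<in> carrier M"
  shows "fminus R (fminus R (fdelta R (m \<oplus>\<^bsub>M\<^esub> m') \<one>) (fdelta R m \<one>)) (fdelta R m' \<one>) \<in> lin_rels R M"
proof (rule lin_relsI[where B = "{m \<oplus>\<^bsub>M\<^esub> m', m, m'}"])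
  let ?B = "{m \<oplus>\<^bsub>M\<^esub> m', m, m'}"
  have B: "finite ?B" "?B \<subseteq> carrier M" using assms by auto
  have c: "fminus R (fdelta R (m \<oplus>\<^bsub>M\<^esub> m') \<one>) (fdelta R m \<one>) x \<in> carrier R" for x
    by (simp add: fminus_def fadd_def fneg_def)
  have "(\<Oplus>\<^bsub>M\<^esub>x\<in>?B. fminus R (fminus R (fdelta R (m \<oplus>\<^bsub>M\<^esub> m') \<one>) (fdelta R m \<one>)) (fdelta R m' \<one>) x \<odot>\<^bsub>M\<^esub> x)
      = ((m \<oplus>\<^bsub>M\<^esub> m') \<ominus>\<^bsub>M\<^esub> m) \<ominus>\<^bsub>M\<^esub> m'"
    using assms B by (simp add: finsum_fminus_smult finsum_fdelta_smult c)
  also have "\<dots> = \<zero>\<^bsub>M\<^esub>"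
    using assms M.r_neg[of "m \<oplus>\<^bsub>M\<^esub> m'"] by (simp add: a_minus_def M.minus_add M.a_assoc)
  finally show "(\<Oplus>\<^bsub>M\<^esub>x\<in>?B. fminus R (fminus R (fdelta R (m \<oplus>\<^bsub>M\<^esub> m') \<one>) (fdelta R m \<one>)) (fdelta R m' \<one>) x \<odot>\<^bsub>M\<^esub> x) = \<zero>\<^bsub>M\<^esub>" .
qed (use assms in \<open>auto simp: fminus_def fadd_def fneg_def fdelta_def\<close>)

lemma lin_rels_fdelta_smult:
  assumes "r \<in> carrier R" "m \<in> carrier M"
  shows "fminus R (fdelta R (r \<odot>\<^bsub>M\<^esub> m) \<one>) (fdelta R m r) \<in> lin_rels R M"
proof (rule lin_relsI[where B = "{r \<odot>\<^bsub>M\<^esub> m, m}"])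
  show "(\<Oplus>\<^bsub>M\<^esub>x\<in>{r \<odot>\<^bsub>M\<^esub> m, m}. fminus R (fdelta R (r \<odot>\<^bsub>M\<^esub> m) \<one>) (fdelta R m r) x \<odot>\<^bsub>M\<^esub> x) = \<zero>\<^bsub>M\<^esub>"
    using assms by (simp add: finsum_fminus_smult finsum_fdelta_smult a_minus_def M.r_neg)
qed (use assms in \<open>auto simp: fminus_def fadd_def fneg_def fdelta_def\<close>)

lemma lin_rels_lincomb:
  assumes "finite L" "a \<in> L \<rightarrow> carrier R" "\<And>l. l \<in> L \<Longrightarrow> k l \<in> lin_rels R M"
  shows "(\<lambda>x. \<Oplus>l\<in>L. a l \<otimes> k l x) \<in> lin_rels R M"
proof -
  define B where "B = (\<Union>l\<in>L. fsupp R (k l))"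
  have B: "finite B" "B \<subseteq> carrier M"
    unfolding B_def using assms(1) lin_relsD(3,4)[OF assms(3)] by auto
  have kc: "\<And>l x. l \<in> L \<Longrightarrow> k l x \<in> carrier R" and ac: "\<And>l. l \<in> L \<Longrightarrow> a l \<in> carrier R"
    using assms lin_relsD by auto
  show ?thesis
  proof (rule lin_relsI[OF _ B])
    show "(\<Oplus>l\<in>L. a l \<otimes> k l x) \<in> carrier R" for x
      using kc ac by (intro R.finsum_closed) auto
    show "(\<Oplus>l\<in>L. a l \<otimes> k l x) = \<zero>" if "x \<notin> B" for x
    proof -
      have "(\<Oplus>l\<in>L. a l \<otimes> k l x) = (\<Oplus>l\<in>L. \<zero>)"
        using that ac unfolding B_def fsupp_def by (intro R.finsum_cong') auto
      then show ?thesis by simp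
    qed
    have "(\<Oplus>\<^bsub>M\<^esub>x\<in>B. (\<Oplus>l\<in>L. a l \<otimes> k l x) \<odot>\<^bsub>M\<^esub> x) = (\<Oplus>\<^bsub>M\<^esub>x\<in>B. \<Oplus>\<^bsub>M\<^esub>l\<in>L. a l \<odot>\<^bsub>M\<^esub> (k l x \<odot>\<^bsub>M\<^esub> x))"
    proof (rule M.finsum_cong')
      fix x assume "x \<in> B"
      then have x: "x \<in> carrier M" using B by blast
      have "(\<Oplus>l\<in>L. a l \<otimes> k l x) \<odot>\<^bsub>M\<^esub> x = (\<Oplus>\<^bsub>M\<^esub>l\<in>L. (a l \<otimes> k l x) \<odot>\<^bsub>M\<^esub> x)"
        using assms(1) kc ac x by (intro finsum_smult_rdistr) auto
      also have "\<dots> = (\<Oplus>\<^bsub>M\<^esub>l\<in>L. a l \<odot>\<^bsub>M\<^esub> (k l x \<odot>\<^bsub>M\<^esub> x))"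
        using kc ac x by (intro M.finsum_cong') (auto simp: smult_assoc1)
      finally show "(\<Oplus>l\<in>L. a l \<otimes> k l x) \<odot>\<^bsub>M\<^esub> x = (\<Oplus>\<^bsub>M\<^esub>l\<in>L. a l \<odot>\<^bsub>M\<^esub> (k l x \<odot>\<^bsub>M\<^esub> x))" .
    qed (use kc ac B in \<open>auto intro!: M.finsum_closed\<close>)
    also have "\<dots> = (\<Oplus>\<^bsub>M\<^esub>l\<in>L. a l \<odot>\<^bsub>M\<^esub> (\<Oplus>\<^bsub>M\<^esub>x\<in>B. k l x \<odot>\<^bsub>M\<^esub> x))"
      using assms(1) B kc ac by (subst M.finsum_swap) (auto simp: finsum_smult_ldistr subsetD intro!: M.finsum_cong')
    also have "\<dots> = (\<Oplus>\<^bsub>M\<^esub>l\<in>L. \<zero>\<^bsub>M\<^esub>)"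
    proof (rule M.finsum_cong')
      fix l assume l: "l \<in> L"
      have "fsupp R (k l) \<subseteq> B" unfolding B_def using l by blast
      then show "a l \<odot>\<^bsub>M\<^esub> (\<Oplus>\<^bsub>M\<^esub>x\<in>B. k l x \<odot>\<^bsub>M\<^esub> x) = \<zero>\<^bsub>M\<^esub>"
        using lin_rels_eval[OF assms(3)[OF l] B] ac[OF l] by simp
    qed auto
    also have "\<dots> = \<zero>\<^bsub>M\<^esub>" by simp
    finally show "(\<Oplus>\<^bsub>M\<^esub>x\<in>B. (\<Oplus>l\<in>L. a l \<otimes> k l x) \<odot>\<^bsub>M\<^esub> x) = \<zero>\<^bsub>M\<^esub>" .
  qed
qed

end

context ring_hom_cring begin

lemma hom_fdelta: "c \<in> carrier R \<Longrightarrow> h (fdelta R m c x) = fdelta S m (h c) x"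
  by (simp add: fdelta_def)

lemma base_change_span_add:
  assumes "f \<in> base_change_span S h K" "s \<in> carrier S" "k \<in> K" "\<forall>k\<in>K. \<forall>x. k x \<in> carrier R"
  shows "fadd S f (fsmult S s (\<lambda>x. h (k x))) \<in> base_change_span S h K"
proof -
  obtain L u kk where L: "finite (L::nat set)" "u \<in> L \<rightarrow> carrier S" "\<forall>l\<in>L. kk l \<in> K"
    and f: "f = (\<lambda>x. \<Oplus>\<^bsub>S\<^esub>l\<in>L. u l \<otimes>\<^bsub>S\<^esub> h (kk l x))"
    using assms(1) unfolding base_change_span_def by blast
  obtain n where n: "n \<notin> L" using L(1) infinite_UNIV_nat ex_new_if_finite by blast
  let ?u = "u(n := s)" and ?k = "kk(n := k)"
  have terms: "(\<lambda>l. ?u l \<otimes>\<^bsub>S\<^esub> h (?k l x)) \<in> insert n L \<rightarrow> carrier S" for x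
    using L assms(2-4) by (auto simp: Pi_def)
  have "fadd S f (fsmult S s (\<lambda>x. h (k x))) = (\<lambda>x. \<Oplus>\<^bsub>S\<^esub>l\<in>insert n L. ?u l \<otimes>\<^bsub>S\<^esub> h (?k l x))"
  proof
    fix x
    have f_closed: "f x \<in> carrier S"
      unfolding f using L(2,3) assms(4) by (intro S.finsum_closed) auto
    have "(\<Oplus>\<^bsub>S\<^esub>l\<in>L. ?u l \<otimes>\<^bsub>S\<^esub> h (?k l x)) = f x"
      unfolding f using n L(2,3) assms(4) by (intro S.finsum_cong') auto
    then show "fadd S f (fsmult S s (\<lambda>x. h (k x))) x = (\<Oplus>\<^bsub>S\<^esub>l\<in>insert n L. ?u l \<otimes>\<^bsub>S\<^esub> h (?k l x))"
      using L(1) n terms[of x] f_closed by (simp add: fadd_def fsmult_def S.a_comm)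
  qed
  moreover have "?u \<in> insert n L \<rightarrow> carrier S" "\<forall>l\<in>insert n L. ?k l \<in> K"
    using L assms(2,3) by auto
  ultimately show ?thesis
    unfolding base_change_span_def using L(1) by blast
qed

lemma tensor_rel_subset_base_change_span:
  assumes "module R N"
  shows "tensor_rel R S h N \<subseteq> base_change_span S h (lin_rels R N)"
proof
  interpret N: module R N by fact
  have kc: "\<forall>k\<in>lin_rels R N. \<forall>x. k x \<in> carrier R" by (simp add: N.lin_relsD)
  fix f assume "f \<in> tensor_rel R S h N"
  then show "f \<in> base_change_span S h (lin_rels R N)"
  proof induction
    case zero
    show ?case unfolding base_change_span_def
      by (intro CollectI exI[of _ "{}"] exI[of _ "\<lambda>_. \<zero>\<^bsub>S\<^esub>"] exI[of _ "\<lambda>_ _. \<zero>"]) simp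
  next
    case (add_rel k s m m')
    let ?k = "fminus R (fminus R (fdelta R (m \<oplus>\<^bsub>N\<^esub> m') \<one>) (fdelta R m \<one>)) (fdelta R m' \<one>)"
    have "(\<lambda>x. h (?k x)) = fminus S (fminus S (fdelta S (m \<oplus>\<^bsub>N\<^esub> m') \<one>\<^bsub>S\<^esub>) (fdelta S m \<one>\<^bsub>S\<^esub>)) (fdelta S m' \<one>\<^bsub>S\<^esub>)"
      by (simp add: hom_fdelta fminus_def fadd_def fneg_def)
    then show ?case
      using base_change_span_add[OF add_rel.IH add_rel.hyps(2) N.lin_rels_fdelta_add[OF add_rel.hyps(3,4)] kc]
      by simp
  next
    case (smult_rel k s r m)
    let ?k = "fminus R (fdelta R (r \<odot>\<^bsub>N\<^esub> m) \<one>) (fdelta R m r)"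
    have "(\<lambda>x. h (?k x)) = fminus S (fdelta S (r \<odot>\<^bsub>N\<^esub> m) \<one>\<^bsub>S\<^esub>) (fdelta S m (h r))"
      using smult_rel.hyps(3) by (simp add: hom_fdelta fminus_def fadd_def fneg_def)
    then show ?case
      using base_change_span_add[OF smult_rel.IH smult_rel.hyps(2) N.lin_rels_fdelta_smult[OF smult_rel.hyps(3,4)] kc]
      by simp
  qed
qed

lemma tensor_rel_hom_lin_rels:
  assumes "module R N" "k \<in> lin_rels R N"
  shows "(\<lambda>x. h (k x)) \<in> tensor_rel R S h N"
proof -
  interpret N: module R N by fact
  let ?D = "fsupp R k"
  note k = N.lin_relsD[OF assms(2)]
  have eq: "fcomb S (\<lambda>x. x) (\<lambda>x. h (k x)) ?D = (\<lambda>x. h (k x))"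
  proof
    fix x
    have "{d \<in> ?D. d = x} = (if x \<in> ?D then {x} else {})" by auto
    then show "fcomb S (\<lambda>x. x) (\<lambda>x. h (k x)) ?D x = h (k x)"
      using k by (auto simp: fcomb_apply fsupp_def)
  qed
  have "tensor_eq R S h N (\<lambda>x. h (k x)) (fdelta S \<zero>\<^bsub>N\<^esub> \<one>\<^bsub>S\<^esub>)"
    using tensor_eq_fcomb_lincomb[OF assms(1) k(3), of "\<lambda>x. x" k] k assms(2)
    unfolding eq by (auto simp: lin_rels_def)
  then have "tensor_eq R S h N (\<lambda>x. h (k x)) (\<lambda>x. \<zero>\<^bsub>S\<^esub>)"
    by (rule tensor_eq_trans[OF _ tensor_eq_fdelta_zero[OF assms(1) S.one_closed]]) (simp_all add: k(1))
  then show ?thesis using k(1) by (simp add: tensor_eq_zero_iff)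
qed

lemma tensor_rel_eq_base_change_span:
  assumes "module R N"
  shows "tensor_rel R S h N = base_change_span S h (lin_rels R N)"
proof
  show "base_change_span S h (lin_rels R N) \<subseteq> tensor_rel R S h N"
  proof
    fix f assume "f \<in> base_change_span S h (lin_rels R N)"
    then obtain L u k where L: "finite (L::nat set)" "u \<in> L \<rightarrow> carrier S" "\<forall>l\<in>L. k l \<in> lin_rels R N"
      and f: "f = (\<lambda>x. \<Oplus>\<^bsub>S\<^esub>l\<in>L. fsmult S (u l) (\<lambda>x. h (k l x)) x)"
      unfolding base_change_span_def fsmult_def by blast
    show "f \<in> tensor_rel R S h N"
      unfolding f using L assms by (intro tensor_rel_finsum tensor_rel_smult tensor_rel_hom_lin_rels) auto
  qed
qed (rule tensor_rel_subset_base_change_span[OF assms])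

end

lemma finsum_substructure:
  assumes "abelian_monoid G" "abelian_monoid H" "carrier G \<subseteq> carrier H" "\<zero>\<^bsub>G\<^esub> = \<zero>\<^bsub>H\<^esub>"
    and "\<And>x y. x \<in> carrier G \<Longrightarrow> y \<in> carrier G \<Longrightarrow> x \<oplus>\<^bsub>G\<^esub> y = x \<oplus>\<^bsub>H\<^esub> y"
    and "f \<in> A \<rightarrow> carrier G"
  shows "finsum G f A = finsum H f A"
proof -
  interpret G: abelian_monoid G by fact
  interpret H: abelian_monoid H by fact
  show ?thesis
  proof (cases "finite A")
    case True
    then show ?thesis
      using assms(6)
    proof (induction A rule: finite_induct)
      case (insert a A)
      then have G: "f a \<in> carrier G" "f \<in> A \<rightarrow> carrier G" by auto
      then have H: "f a \<in> carrier H" "f \<in> A \<rightarrow> carrier H" using assms(3) by auto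
      have "finsum G f (insert a A) = f a \<oplus>\<^bsub>G\<^esub> finsum G f A"
        using insert.hyps G by simp
      also have "\<dots> = f a \<oplus>\<^bsub>H\<^esub> finsum H f A"
        using assms(5)[OF G(1) G.finsum_closed[OF G(2)]] insert.IH G(2) by simp
      also have "\<dots> = finsum H f (insert a A)"
        using insert.hyps H by simp
      finally show ?case .
    qed (simp add: assms(4))
  qed (simp add: assms(4))
qed

lemma (in submodule) lin_rels_submodule:
  assumes "module R M" "k \<in> lin_rels R M" "\<And>x. x \<notin> H \<Longrightarrow> k x = \<zero>\<^bsub>R\<^esub>"
  shows "k \<in> lin_rels R (M\<lparr>carrier := H\<rparr>)"
proof -
  interpret M: module R M by fact
  interpret H: module R "M\<lparr>carrier := H\<rparr>" by (rule submodule_is_module[OF assms(1)])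
  have supp: "fsupp R k \<subseteq> H" using assms(3) by (auto simp: fsupp_def)
  have HM: "H \<subseteq> carrier M" using subset by simp
  have "(\<Oplus>\<^bsub>M\<lparr>carrier := H\<rparr>\<^esub>x\<in>fsupp R k. k x \<odot>\<^bsub>M\<^esub> x) = (\<Oplus>\<^bsub>M\<^esub>x\<in>fsupp R k. k x \<odot>\<^bsub>M\<^esub> x)"
    using supp M.lin_relsD(1)[OF assms(2)]
    by (intro finsum_substructure[OF H.abelian_monoid_axioms M.abelian_monoid_axioms]) (use HM in auto)
  then show ?thesis
    using assms(2,3) M.lin_relsD[OF assms(2)] by (auto simp: lin_rels_def)
qed

lemma ideal_module_is_module:
  assumes "cring R" "ideal I R"
  shows "module R (ideal_module R I)"
proof -
  interpret R: cring R by fact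
  interpret I: ideal I R by fact
  have "abelian_group (ideal_module R I)"
  proof (rule abelian_groupI)
    show "\<exists>y\<in>carrier (ideal_module R I). y \<oplus>\<^bsub>ideal_module R I\<^esub> x = \<zero>\<^bsub>ideal_module R I\<^esub>"
      if "x \<in> carrier (ideal_module R I)" for x
      using that I.a_inv_closed I.Icarr by (auto simp: ideal_module_def R.l_neg intro!: bexI[of _ "\<ominus>\<^bsub>R\<^esub> x"])
  qed (auto simp: ideal_module_def I.a_closed I.Icarr R.a_ac)
  then show ?thesis
    by (rule moduleI[OF assms(1)])
      (auto simp: ideal_module_def I.I_l_closed I.Icarr R.l_distr R.r_distr R.m_assoc)
qed

lemma lin_rels_ideal_module_eval:
  assumes "cring R" "ideal I R" "k \<in> lin_rels R (ideal_module R I)"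
    and "finite B" "B \<subseteq> I" "fsupp R k \<subseteq> B"
  shows "(\<Oplus>\<^bsub>R\<^esub>x\<in>B. k x \<otimes>\<^bsub>R\<^esub> x) = \<zero>\<^bsub>R\<^esub>"
proof -
  interpret R: cring R by fact
  interpret I: ideal I R by fact
  interpret N: module R "ideal_module R I" by (rule ideal_module_is_module[OF assms(1,2)])
  have "(\<Oplus>\<^bsub>ideal_module R I\<^esub>x\<in>B. k x \<otimes>\<^bsub>R\<^esub> x) = (\<Oplus>\<^bsub>R\<^esub>x\<in>B. k x \<otimes>\<^bsub>R\<^esub> x)"
    using assms(5) N.lin_relsD(1)[OF assms(3)]
    by (intro finsum_substructure[OF N.abelian_monoid_axioms R.abelian_monoid_axioms])
      (auto simp: ideal_module_def I.Icarr I.I_l_closed)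
  then show ?thesis
    using N.lin_rels_eval[OF assms(3,4)] assms(5,6) by (simp add: ideal_module_def)
qed

lemma prod_module_is_module:
  assumes "module R M"
  shows "module R (prod_module M K)"
proof -
  interpret M: module R M by fact
  have "abelian_group (prod_module M K)"
  proof (rule abelian_groupI)
    show "\<exists>g\<in>carrier (prod_module M K). g \<oplus>\<^bsub>prod_module M K\<^esub> f = \<zero>\<^bsub>prod_module M K\<^esub>"
      if "f \<in> carrier (prod_module M K)" for f
      using that by (intro bexI[of _ "\<lambda>i\<in>K. \<ominus>\<^bsub>M\<^esub> f i"]) (auto simp: prod_module_def M.l_neg)
  qed (auto simp: prod_module_def M.a_ac fun_eq_iff extensional_def)
  then show ?thesis
    by (rule moduleI[OF M.R.cring_axioms])
      (auto simp: prod_module_def M.smult_l_distr M.smult_r_distr M.smult_assoc1 fun_eq_iff extensional_def)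
qed

definition module_hom :: "('r, 'a) ring_scheme \<Rightarrow> ('r, 'm, 'b) module_scheme \<Rightarrow> ('r, 'n, 'c) module_scheme \<Rightarrow> ('m \<Rightarrow> 'n) set" where
  "module_hom R M N = {\<phi>. \<phi> \<in> carrier M \<rightarrow> carrier N
      \<and> (\<forall>x\<in>carrier M. \<forall>y\<in>carrier M. \<phi> (x \<oplus>\<^bsub>M\<^esub> y) = \<phi> x \<oplus>\<^bsub>N\<^esub> \<phi> y)
      \<and> (\<forall>r\<in>carrier R. \<forall>x\<in>carrier M. \<phi> (r \<odot>\<^bsub>M\<^esub> x) = r \<odot>\<^bsub>N\<^esub> \<phi> x)}"

locale module_hom_pair = M: module R M + N: module R N for R :: "('r, 'a) ring_scheme" (structure)
    and M :: "('r, 'm, 'b) module_scheme" and N :: "('r, 'n, 'c) module_scheme" +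
  fixes \<phi> assumes hom: "\<phi> \<in> module_hom R M N"
begin

lemma closed [simp]: "x \<in> carrier M \<Longrightarrow> \<phi> x \<in> carrier N"
  using hom by (auto simp: module_hom_def)

lemma add: "x \<in> carrier M \<Longrightarrow> y \<in> carrier M \<Longrightarrow> \<phi> (x \<oplus>\<^bsub>M\<^esub> y) = \<phi> x \<oplus>\<^bsub>N\<^esub> \<phi> y"
  using hom by (simp add: module_hom_def)

lemma smult: "r \<in> carrier R \<Longrightarrow> x \<in> carrier M \<Longrightarrow> \<phi> (r \<odot>\<^bsub>M\<^esub> x) = r \<odot>\<^bsub>N\<^esub> \<phi> x"
  using hom by (simp add: module_hom_def)

lemma zero [simp]: "\<phi> \<zero>\<^bsub>M\<^esub> = \<zero>\<^bsub>N\<^esub>"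
  using smult[of \<zero> "\<zero>\<^bsub>M\<^esub>"] by simp

lemma neg: "x \<in> carrier M \<Longrightarrow> \<phi> (\<ominus>\<^bsub>M\<^esub> x) = \<ominus>\<^bsub>N\<^esub> \<phi> x"
  using smult[of "\<ominus> \<one>" x] M.smult_l_minus[of \<one> x] N.smult_l_minus[of \<one> "\<phi> x"] by simp

lemma minus: "x \<in> carrier M \<Longrightarrow> y \<in> carrier M \<Longrightarrow> \<phi> (x \<ominus>\<^bsub>M\<^esub> y) = \<phi> x \<ominus>\<^bsub>N\<^esub> \<phi> y"
  by (simp add: a_minus_def add neg)

lemma finsum: "finite A \<Longrightarrow> f \<in> A \<rightarrow> carrier M \<Longrightarrow> \<phi> (\<Oplus>\<^bsub>M\<^esub>a\<in>A. f a) = (\<Oplus>\<^bsub>N\<^esub>a\<in>A. \<phi> (f a))"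
  by (induction A rule: finite_induct) (auto simp: add M.finsum_closed Pi_def)

lemma kernel_submodule: "submodule {x \<in> carrier M. \<phi> x = \<zero>\<^bsub>N\<^esub>} R M"
  by (rule M.submoduleI) (auto simp: add smult neg)

lemma image_submodule: "submodule (\<phi> ` carrier M) R N"
proof (rule N.submoduleI)
  show "\<ominus>\<^bsub>N\<^esub> a \<in> \<phi> ` carrier M" if "a \<in> \<phi> ` carrier M" for a
    using that by (auto simp: neg[symmetric])
qed (auto simp: add[symmetric] smult[symmetric] image_iff intro: bexI[of _ "\<zero>\<^bsub>M\<^esub>"])

end

definition lin_combs :: "('r, 'a) ring_scheme \<Rightarrow> 'j set \<Rightarrow> ('j \<Rightarrow> 'r) \<Rightarrow> 'r set" where
  "lin_combs R J r = {\<Oplus>\<^bsub>R\<^esub>j\<in>J. c j \<otimes>\<^bsub>R\<^esub> r j | c. c \<in> J \<rightarrow> carrier R}"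

context cring begin

lemma finsum_matrix_assoc:
  assumes "finite K" "finite L" "x \<in> L \<rightarrow> carrier R" "\<And>l k. l \<in> L \<Longrightarrow> k \<in> K \<Longrightarrow> Y l k \<in> carrier R"
    and "z \<in> K \<rightarrow> carrier R"
  shows "(\<Oplus>k\<in>K. (\<Oplus>l\<in>L. x l \<otimes> Y l k) \<otimes> z k) = (\<Oplus>l\<in>L. x l \<otimes> (\<Oplus>k\<in>K. Y l k \<otimes> z k))"
proof -
  have "(\<Oplus>k\<in>K. (\<Oplus>l\<in>L. x l \<otimes> Y l k) \<otimes> z k) = (\<Oplus>k\<in>K. \<Oplus>l\<in>L. x l \<otimes> (Y l k \<otimes> z k))"
    using assms by (intro finsum_cong') (auto simp: finsum_ldistr m_assoc Pi_def intro!: finsum_cong')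
  also have "\<dots> = (\<Oplus>l\<in>L. \<Oplus>k\<in>K. x l \<otimes> (Y l k \<otimes> z k))"
    using assms by (intro finsum_swap) (auto simp: Pi_def)
  also have "\<dots> = (\<Oplus>l\<in>L. x l \<otimes> (\<Oplus>k\<in>K. Y l k \<otimes> z k))"
  proof (rule finsum_cong')
    fix l assume "l \<in> L"
    then show "(\<Oplus>k\<in>K. x l \<otimes> (Y l k \<otimes> z k)) = x l \<otimes> (\<Oplus>k\<in>K. Y l k \<otimes> z k)"
      using assms by (intro finsum_rdistr[symmetric]) auto
  qed (use assms in \<open>auto simp: Pi_def intro!: finsum_closed\<close>)
  finally show ?thesis .
qed

lemma lin_combs_add:
  assumes "c \<in> J \<rightarrow> carrier R" "d \<in> J \<rightarrow> carrier R" "r \<in> J \<rightarrow> carrier R"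
  shows "(\<Oplus>j\<in>J. c j \<otimes> r j) \<oplus> (\<Oplus>j\<in>J. d j \<otimes> r j) = (\<Oplus>j\<in>J. (c j \<oplus> d j) \<otimes> r j)"
proof -
  have "(\<Oplus>j\<in>J. c j \<otimes> r j) \<oplus> (\<Oplus>j\<in>J. d j \<otimes> r j) = (\<Oplus>j\<in>J. c j \<otimes> r j \<oplus> d j \<otimes> r j)"
    using assms by (intro finsum_addf[symmetric]) (auto simp: Pi_def)
  also have "\<dots> = (\<Oplus>j\<in>J. (c j \<oplus> d j) \<otimes> r j)"
    using assms by (intro finsum_cong') (auto simp: l_distr Pi_def)
  finally show ?thesis .
qed

lemma lin_combs_mult:
  assumes "finite J" "a \<in> carrier R" "c \<in> J \<rightarrow> carrier R" "r \<in> J \<rightarrow> carrier R"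
  shows "a \<otimes> (\<Oplus>j\<in>J. c j \<otimes> r j) = (\<Oplus>j\<in>J. (a \<otimes> c j) \<otimes> r j)"
proof -
  have "a \<otimes> (\<Oplus>j\<in>J. c j \<otimes> r j) = (\<Oplus>j\<in>J. a \<otimes> (c j \<otimes> r j))"
    using assms by (intro finsum_rdistr) (auto simp: Pi_def)
  also have "\<dots> = (\<Oplus>j\<in>J. (a \<otimes> c j) \<otimes> r j)"
    using assms by (intro finsum_cong') (auto simp: m_assoc Pi_def)
  finally show ?thesis .
qed

lemma lin_combs_ideal:
  assumes "finite J" "r \<in> J \<rightarrow> carrier R"
  shows "ideal (lin_combs R J r) R"
proof -
  have sub: "lin_combs R J r \<subseteq> carrier R"
  proof
    fix x assume "x \<in> lin_combs R J r"
    then obtain c where c: "c \<in> J \<rightarrow> carrier R" "x = (\<Oplus>j\<in>J. c j \<otimes> r j)"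
      unfolding lin_combs_def by blast
    have "(\<lambda>j. c j \<otimes> r j) \<in> J \<rightarrow> carrier R"
      using c(1) assms(2) by (auto simp: Pi_def)
    then show "x \<in> carrier R" unfolding c(2) by (rule finsum_closed)
  qed
  have mult: "a \<otimes> x \<in> lin_combs R J r" if "x \<in> lin_combs R J r" "a \<in> carrier R" for a x
  proof -
    from that(1) obtain c where c: "c \<in> J \<rightarrow> carrier R" "x = (\<Oplus>j\<in>J. c j \<otimes> r j)"
      unfolding lin_combs_def by blast
    have "(\<lambda>j. a \<otimes> c j) \<in> J \<rightarrow> carrier R" using c(1) that(2) by (auto simp: Pi_def)
    then show ?thesis
      unfolding c(2) lin_combs_mult[OF assms(1) that(2) c(1) assms(2)] lin_combs_def
      by (intro CollectI exI[of _ "\<lambda>j. a \<otimes> c j"]) simp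
  qed
  show ?thesis
  proof (rule idealI[OF ring_axioms])
    show "subgroup (lin_combs R J r) (add_monoid R)"
    proof (rule add.subgroupI)
      show "lin_combs R J r \<noteq> {}"
        using assms(2) unfolding lin_combs_def by (intro ex_in_conv[THEN iffD1] exI CollectI exI[of _ "\<lambda>_. \<zero>"]) auto
      show "\<ominus> x \<in> lin_combs R J r" if "x \<in> lin_combs R J r" for x
        using mult[OF that, of "\<ominus> \<one>"] that sub by (auto simp: l_minus)
      show "x \<oplus> y \<in> lin_combs R J r" if "x \<in> lin_combs R J r" "y \<in> lin_combs R J r" for x y
      proof -
        from that obtain c d where "c \<in> J \<rightarrow> carrier R" "d \<in> J \<rightarrow> carrier R"
          "x = (\<Oplus>j\<in>J. c j \<otimes> r j)" "y = (\<Oplus>j\<in>J. d j \<otimes> r j)"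
          unfolding lin_combs_def by blast
        moreover have "(\<lambda>j. c j \<oplus> d j) \<in> J \<rightarrow> carrier R" using calculation(1,2) by (auto simp: Pi_def)
        ultimately show ?thesis
          using lin_combs_add[of c J d r] assms(2) unfolding lin_combs_def
          by (intro CollectI exI[of _ "\<lambda>j. c j \<oplus> d j"]) simp
      qed
    qed (use sub in auto)
    show "x \<otimes> a \<in> lin_combs R J r" if "a \<in> lin_combs R J r" "x \<in> carrier R" for a x
      by (rule mult[OF that])
    show "a \<otimes> x \<in> lin_combs R J r" if "a \<in> lin_combs R J r" "x \<in> carrier R" for a x
      using mult[OF that] that sub m_comm by auto
  qed
qed

lemma lin_combs_generator:
  assumes "finite J" "r \<in> J \<rightarrow> carrier R" "q \<in> J"
  shows "r q \<in> lin_combs R J r"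
proof -
  have "(\<Oplus>j\<in>J. (if j = q then \<one> else \<zero>) \<otimes> r j) = (\<Oplus>j\<in>J. if j = q then r q else \<zero>)"
    using assms by (intro finsum_cong') (auto simp: Pi_def)
  also have "\<dots> = r q" using assms funcset_mem[OF assms(2,3)] by (simp add: finsum_delta)
  finally show ?thesis
    unfolding lin_combs_def by (intro CollectI exI[of _ "\<lambda>j. if j = q then \<one> else \<zero>"]) auto
qed

end

definition trivial_relation ::
    "('r, 'a) ring_scheme \<Rightarrow> ('s, 'c) ring_scheme \<Rightarrow> ('r \<Rightarrow> 's) \<Rightarrow> nat set \<Rightarrow> (nat \<Rightarrow> 's) \<Rightarrow> (nat \<Rightarrow> 'x \<Rightarrow> 'r) \<Rightarrow> bool" where
  "trivial_relation R S h J t v \<longleftrightarrow> (\<exists>(L::nat set) u a. finite L \<and> u \<in> L \<rightarrow> carrier S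
      \<and> (\<forall>j\<in>J. \<forall>l\<in>L. a j l \<in> carrier R)
      \<and> (\<forall>j\<in>J. t j = (\<Oplus>\<^bsub>S\<^esub>l\<in>L. u l \<otimes>\<^bsub>S\<^esub> h (a j l)))
      \<and> (\<forall>l\<in>L. \<forall>x. (\<Oplus>\<^bsub>R\<^esub>j\<in>J. a j l \<otimes>\<^bsub>R\<^esub> v j x) = \<zero>\<^bsub>R\<^esub>))"

context ring_hom_cring begin

lemma trivial_relationI:
  assumes "finite (L::nat set)" "u \<in> L \<rightarrow> carrier S" "\<And>j l. j \<in> J \<Longrightarrow> l \<in> L \<Longrightarrow> a j l \<in> carrier R"
    and "\<And>j. j \<in> J \<Longrightarrow> t j = (\<Oplus>\<^bsub>S\<^esub>l\<in>L. u l \<otimes>\<^bsub>S\<^esub> h (a j l))"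
    and "\<And>l x. l \<in> L \<Longrightarrow> (\<Oplus>j\<in>J. a j l \<otimes> v j x) = \<zero>"
  shows "trivial_relation R S h J t v"
  unfolding trivial_relation_def using assms by (intro exI[of _ L] exI[of _ u] exI[of _ a]) auto

lemma trivial_relationE:
  assumes "trivial_relation R S h J t v"
  obtains L u a where "finite (L::nat set)" "u \<in> L \<rightarrow> carrier S"
    "\<And>j l. j \<in> J \<Longrightarrow> l \<in> L \<Longrightarrow> a j l \<in> carrier R"
    "\<And>j. j \<in> J \<Longrightarrow> t j = (\<Oplus>\<^bsub>S\<^esub>l\<in>L. u l \<otimes>\<^bsub>S\<^esub> h (a j l))"
    "\<And>l x. l \<in> L \<Longrightarrow> (\<Oplus>j\<in>J. a j l \<otimes> v j x) = \<zero>"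
proof -
  from assms obtain L u a where "finite (L::nat set) \<and> u \<in> L \<rightarrow> carrier S \<and> (\<forall>j\<in>J. \<forall>l\<in>L. a j l \<in> carrier R)
      \<and> (\<forall>j\<in>J. t j = (\<Oplus>\<^bsub>S\<^esub>l\<in>L. u l \<otimes>\<^bsub>S\<^esub> h (a j l))) \<and> (\<forall>l\<in>L. \<forall>x. (\<Oplus>j\<in>J. a j l \<otimes> v j x) = \<zero>)"
    unfolding trivial_relation_def by blast
  then show ?thesis by (intro that) auto
qed

lemma finsum_hom_recombine:
  assumes "finite J" "finite L" "u \<in> L \<rightarrow> carrier S" "\<And>j l. j \<in> J \<Longrightarrow> l \<in> L \<Longrightarrow> a j l \<in> carrier R"
    and "w \<in> J \<rightarrow> carrier R"
  shows "(\<Oplus>\<^bsub>S\<^esub>j\<in>J. (\<Oplus>\<^bsub>S\<^esub>l\<in>L. u l \<otimes>\<^bsub>S\<^esub> h (a j l)) \<otimes>\<^bsub>S\<^esub> h (w j))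
       = (\<Oplus>\<^bsub>S\<^esub>l\<in>L. u l \<otimes>\<^bsub>S\<^esub> h (\<Oplus>j\<in>J. a j l \<otimes> w j))"
proof -
  have "(\<Oplus>\<^bsub>S\<^esub>j\<in>J. (\<Oplus>\<^bsub>S\<^esub>l\<in>L. u l \<otimes>\<^bsub>S\<^esub> h (a j l)) \<otimes>\<^bsub>S\<^esub> h (w j))
      = (\<Oplus>\<^bsub>S\<^esub>l\<in>L. u l \<otimes>\<^bsub>S\<^esub> (\<Oplus>\<^bsub>S\<^esub>j\<in>J. h (a j l) \<otimes>\<^bsub>S\<^esub> h (w j)))"
    using assms by (intro S.finsum_matrix_assoc) (auto simp: Pi_def)
  also have "\<dots> = (\<Oplus>\<^bsub>S\<^esub>l\<in>L. u l \<otimes>\<^bsub>S\<^esub> h (\<Oplus>j\<in>J. a j l \<otimes> w j))"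
  proof (rule S.finsum_cong')
    fix l assume "l \<in> L"
    then have "h (\<Oplus>j\<in>J. a j l \<otimes> w j) = (\<Oplus>\<^bsub>S\<^esub>j\<in>J. h (a j l) \<otimes>\<^bsub>S\<^esub> h (w j))"
      using assms by (auto simp: Pi_def comp_def intro!: S.finsum_cong')
    then show "u l \<otimes>\<^bsub>S\<^esub> (\<Oplus>\<^bsub>S\<^esub>j\<in>J. h (a j l) \<otimes>\<^bsub>S\<^esub> h (w j)) = u l \<otimes>\<^bsub>S\<^esub> h (\<Oplus>j\<in>J. a j l \<otimes> w j)"
      by simp
  qed (use assms in \<open>auto simp: Pi_def\<close>)
  finally show ?thesis .
qed

lemma trivial_relation_zero:
  assumes "finite J" "t \<in> J \<rightarrow> carrier S" "\<And>j x. j \<in> J \<Longrightarrow> v j x = \<zero>"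
  shows "trivial_relation R S h J t v"
proof (rule trivial_relationI[OF assms(1,2), where a = "\<lambda>j l. if j = l then \<one> else \<zero>"])
  show "t j = (\<Oplus>\<^bsub>S\<^esub>l\<in>J. t l \<otimes>\<^bsub>S\<^esub> h (if j = l then \<one> else \<zero>))" if "j \<in> J" for j
  proof -
    have "(\<Oplus>\<^bsub>S\<^esub>l\<in>J. t l \<otimes>\<^bsub>S\<^esub> h (if j = l then \<one> else \<zero>)) = (\<Oplus>\<^bsub>S\<^esub>l\<in>J. if j = l then t l else \<zero>\<^bsub>S\<^esub>)"
      using assms(2) by (intro S.finsum_cong') (auto simp: Pi_def)
    then show ?thesis using S.finsum_singleton[OF that assms(1,2)] by simp
  qed
  show "(\<Oplus>j\<in>J. (if j = l then \<one> else \<zero>) \<otimes> v j x) = \<zero>" for l x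
  proof -
    have "(\<Oplus>j\<in>J. (if j = l then \<one> else \<zero>) \<otimes> v j x) = (\<Oplus>j\<in>J. \<zero>)"
      using assms(3) by (intro R.finsum_cong') auto
    then show ?thesis by simp
  qed
qed auto

text \<open>Two trivializations are concatenated by indexing the first one by even and the second one
  by odd numbers.\<close>

lemma trivial_relation_add:
  assumes "trivial_relation R S h J t1 v" "trivial_relation R S h J t2 v"
    and "\<And>j. j \<in> J \<Longrightarrow> t j = t1 j \<oplus>\<^bsub>S\<^esub> t2 j"
  shows "trivial_relation R S h J t v"
proof -
  obtain L1 u1 a1 where L1: "finite (L1::nat set)" "u1 \<in> L1 \<rightarrow> carrier S"
    "\<And>j l. j \<in> J \<Longrightarrow> l \<in> L1 \<Longrightarrow> a1 j l \<in> carrier R"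
    "\<And>j. j \<in> J \<Longrightarrow> t1 j = (\<Oplus>\<^bsub>S\<^esub>l\<in>L1. u1 l \<otimes>\<^bsub>S\<^esub> h (a1 j l))"
    "\<And>l x. l \<in> L1 \<Longrightarrow> (\<Oplus>j\<in>J. a1 j l \<otimes> v j x) = \<zero>"
    by (rule trivial_relationE[OF assms(1)]) (rule that)
  obtain L2 u2 a2 where L2: "finite (L2::nat set)" "u2 \<in> L2 \<rightarrow> carrier S"
    "\<And>j l. j \<in> J \<Longrightarrow> l \<in> L2 \<Longrightarrow> a2 j l \<in> carrier R"
    "\<And>j. j \<in> J \<Longrightarrow> t2 j = (\<Oplus>\<^bsub>S\<^esub>l\<in>L2. u2 l \<otimes>\<^bsub>S\<^esub> h (a2 j l))"
    "\<And>l x. l \<in> L2 \<Longrightarrow> (\<Oplus>j\<in>J. a2 j l \<otimes> v j x) = \<zero>"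
    by (rule trivial_relationE[OF assms(2)]) (rule that)
  define a where "a j l = (if even l then a1 j (l div 2) else a2 j (l div 2))" for j l :: nat
  define u where "u l = (if even l then u1 (l div 2) else u2 (l div 2))" for l :: nat
  show ?thesis
  proof (rule trivial_relationI[where L = "(\<lambda>p. 2*p) ` L1 \<union> (\<lambda>q. 2*q+1) ` L2" and a = a and u = u])
    show "t j = (\<Oplus>\<^bsub>S\<^esub>l\<in>(\<lambda>p. 2*p) ` L1 \<union> (\<lambda>q. 2*q+1) ` L2. u l \<otimes>\<^bsub>S\<^esub> h (a j l))" if "j \<in> J" for j
    proof -
      have "(\<Oplus>\<^bsub>S\<^esub>p\<in>L1. u (2*p) \<otimes>\<^bsub>S\<^esub> h (a j (2*p))) = t1 j"
        using that L1 by (auto simp: a_def u_def Pi_def intro!: S.finsum_cong')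
      moreover have "(\<Oplus>\<^bsub>S\<^esub>q\<in>L2. u (2*q+1) \<otimes>\<^bsub>S\<^esub> h (a j (2*q+1))) = t2 j"
        using that L2 by (auto simp: a_def u_def Pi_def intro!: S.finsum_cong')
      moreover have "(\<Oplus>\<^bsub>S\<^esub>l\<in>(\<lambda>p. 2*p) ` L1 \<union> (\<lambda>q. 2*q+1) ` L2. u l \<otimes>\<^bsub>S\<^esub> h (a j l))
          = (\<Oplus>\<^bsub>S\<^esub>p\<in>L1. u (2*p) \<otimes>\<^bsub>S\<^esub> h (a j (2*p))) \<oplus>\<^bsub>S\<^esub> (\<Oplus>\<^bsub>S\<^esub>q\<in>L2. u (2*q+1) \<otimes>\<^bsub>S\<^esub> h (a j (2*q+1)))"
        using that L1 L2 by (intro S.finsum_even_odd) (auto simp: a_def u_def Pi_def)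
      ultimately show ?thesis using that assms(3) by simp
    qed
    show "(\<Oplus>j\<in>J. a j l \<otimes> v j x) = \<zero>" if "l \<in> (\<lambda>p. 2*p) ` L1 \<union> (\<lambda>q. 2*q+1) ` L2" for l x
      using that L1(5) L2(5) by (auto simp: a_def)
  qed (use L1 L2 in \<open>auto simp: a_def u_def Pi_def\<close>)
qed

lemma trivial_relation_compose:
  assumes "finite J" "finite L1" "u1 \<in> L1 \<rightarrow> carrier S" "\<And>j l. j \<in> J \<Longrightarrow> l \<in> L1 \<Longrightarrow> a1 j l \<in> carrier R"
    and "\<And>j x. j \<in> J \<Longrightarrow> v j x \<in> carrier R"
    and "\<And>j. j \<in> J \<Longrightarrow> t j = (\<Oplus>\<^bsub>S\<^esub>l\<in>L1. u1 l \<otimes>\<^bsub>S\<^esub> h (a1 j l))"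
    and "trivial_relation R S h L1 u1 (\<lambda>l x. \<Oplus>j\<in>J. a1 j l \<otimes> v j x)"
  shows "trivial_relation R S h J t v"
proof -
  obtain L2 u2 a2 where L2: "finite (L2::nat set)" "u2 \<in> L2 \<rightarrow> carrier S"
    "\<And>l l2. l \<in> L1 \<Longrightarrow> l2 \<in> L2 \<Longrightarrow> a2 l l2 \<in> carrier R"
    "\<And>l. l \<in> L1 \<Longrightarrow> u1 l = (\<Oplus>\<^bsub>S\<^esub>l2\<in>L2. u2 l2 \<otimes>\<^bsub>S\<^esub> h (a2 l l2))"
    "\<And>l2 x. l2 \<in> L2 \<Longrightarrow> (\<Oplus>l\<in>L1. a2 l l2 \<otimes> (\<Oplus>j\<in>J. a1 j l \<otimes> v j x)) = \<zero>"
    by (rule trivial_relationE[OF assms(7)]) (rule that)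
  show ?thesis
  proof (rule trivial_relationI[OF L2(1,2), where a = "\<lambda>j l2. \<Oplus>l\<in>L1. a2 l l2 \<otimes> a1 j l"])
    show "t j = (\<Oplus>\<^bsub>S\<^esub>l2\<in>L2. u2 l2 \<otimes>\<^bsub>S\<^esub> h (\<Oplus>l\<in>L1. a2 l l2 \<otimes> a1 j l))" if "j \<in> J" for j
    proof -
      have "t j = (\<Oplus>\<^bsub>S\<^esub>l\<in>L1. (\<Oplus>\<^bsub>S\<^esub>l2\<in>L2. u2 l2 \<otimes>\<^bsub>S\<^esub> h (a2 l l2)) \<otimes>\<^bsub>S\<^esub> h (a1 j l))"
        using that assms(3,4,6) L2(4) by (auto simp: Pi_def intro!: S.finsum_cong')
      also have "\<dots> = (\<Oplus>\<^bsub>S\<^esub>l2\<in>L2. u2 l2 \<otimes>\<^bsub>S\<^esub> h (\<Oplus>l\<in>L1. a2 l l2 \<otimes> a1 j l))"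
        using that assms(2,4) L2 by (intro finsum_hom_recombine) (auto simp: Pi_def)
      finally show ?thesis .
    qed
    show "(\<Oplus>j\<in>J. (\<Oplus>l\<in>L1. a2 l l2 \<otimes> a1 j l) \<otimes> v j x) = \<zero>" if "l2 \<in> L2" for l2 x
      using that assms(1,2,4,5) L2(3,5) by (subst R.finsum_matrix_assoc) (auto simp: Pi_def)
  qed (use assms(4) L2(3) in \<open>auto intro!: R.finsum_closed\<close>)
qed
end

context ring_hom_cring begin

lemma finsum_fcomb_mult:
  assumes "finite D" "finite B" "p ` D \<subseteq> B" "s \<in> D \<rightarrow> carrier S" "g \<in> B \<rightarrow> carrier S"
  shows "(\<Oplus>\<^bsub>S\<^esub>x\<in>B. fcomb S p s D x \<otimes>\<^bsub>S\<^esub> g x) = (\<Oplus>\<^bsub>S\<^esub>d\<in>D. s d \<otimes>\<^bsub>S\<^esub> g (p d))"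
proof -
  have "(\<Oplus>\<^bsub>S\<^esub>x\<in>B. fcomb S p s D x \<otimes>\<^bsub>S\<^esub> g x) = (\<Oplus>\<^bsub>S\<^esub>x\<in>B. \<Oplus>\<^bsub>S\<^esub>d\<in>D. fdelta S (p d) (s d \<otimes>\<^bsub>S\<^esub> g x) x)"
  proof (rule S.finsum_cong')
    fix x assume "x \<in> B"
    then have "fcomb S p s D x \<otimes>\<^bsub>S\<^esub> g x = (\<Oplus>\<^bsub>S\<^esub>d\<in>D. fdelta S (p d) (s d) x \<otimes>\<^bsub>S\<^esub> g x)"
      using assms unfolding fcomb_def by (intro S.finsum_ldistr) (auto simp: Pi_def)
    also have "\<dots> = (\<Oplus>\<^bsub>S\<^esub>d\<in>D. fdelta S (p d) (s d \<otimes>\<^bsub>S\<^esub> g x) x)"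
      using assms \<open>x \<in> B\<close> by (intro S.finsum_cong') (auto simp: Pi_def fdelta_def)
    finally show "fcomb S p s D x \<otimes>\<^bsub>S\<^esub> g x = (\<Oplus>\<^bsub>S\<^esub>d\<in>D. fdelta S (p d) (s d \<otimes>\<^bsub>S\<^esub> g x) x)" .
  qed (use assms in \<open>auto simp: Pi_def intro!: S.finsum_closed\<close>)
  also have "\<dots> = (\<Oplus>\<^bsub>S\<^esub>d\<in>D. \<Oplus>\<^bsub>S\<^esub>x\<in>B. if x = p d then s d \<otimes>\<^bsub>S\<^esub> g (p d) else \<zero>\<^bsub>S\<^esub>)"
    using assms by (subst S.finsum_swap) (auto simp: Pi_def fdelta_def intro!: S.finsum_cong')
  also have "\<dots> = (\<Oplus>\<^bsub>S\<^esub>d\<in>D. s d \<otimes>\<^bsub>S\<^esub> g (p d))"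
    using assms by (intro S.finsum_cong') (auto simp: S.finsum_delta Pi_def image_subset_iff)
  finally show ?thesis .
qed

lemma flat_hom_tensor_rel_ideal:
  assumes "flat_hom R S h" "ideal I R" "finite J" "t \<in> J \<rightarrow> carrier S" "r ` J \<subseteq> I"
    and "(\<Oplus>\<^bsub>S\<^esub>j\<in>J. t j \<otimes>\<^bsub>S\<^esub> h (r j)) = \<zero>\<^bsub>S\<^esub>"
  shows "fcomb S r t J \<in> tensor_rel R S h (ideal_module R I)"
proof -
  let ?f = "fcomb S r t J"
  have rR: "r ` J \<subseteq> carrier R" using assms(5) ideal.Icarr[OF assms(2)] by blast
  have free: "?f \<in> free_on S (ideal_module R I)"
    using assms(3-5) by (intro fcomb_free_on) (auto simp: ideal_module_def)
  have "fsupp S ?f \<subseteq> r ` J"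
  proof
    fix x assume "x \<in> fsupp S ?f"
    then show "x \<in> r ` J" using fcomb_outside[OF assms(3,4), of x r] by (auto simp: fsupp_def)
  qed
  then have "(\<Oplus>\<^bsub>S\<^esub>x\<in>fsupp S ?f. ?f x \<otimes>\<^bsub>S\<^esub> h x) = (\<Oplus>\<^bsub>S\<^esub>x\<in>r ` J. ?f x \<otimes>\<^bsub>S\<^esub> h x)"
    using assms(3,4) rR by (intro S.finsum_mono_neutral_left) (auto simp: fsupp_def)
  also have "\<dots> = (\<Oplus>\<^bsub>S\<^esub>j\<in>J. t j \<otimes>\<^bsub>S\<^esub> h (r j))"
    using assms(3,4) rR by (intro finsum_fcomb_mult) auto
  finally have "(\<Oplus>\<^bsub>S\<^esub>x\<in>fsupp S ?f. ?f x \<otimes>\<^bsub>S\<^esub> h x) = \<zero>\<^bsub>S\<^esub>"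
    using assms(6) by simp
  then have "tensor_eq R S h (ideal_module R I) ?f (\<lambda>x. \<zero>\<^bsub>S\<^esub>)"
    using assms(1,2) free unfolding flat_hom_def by simp
  then show ?thesis
    using assms(4) by (simp add: tensor_eq_zero_iff)
qed

lemma flat_equational_criterion:
  assumes "flat_hom R S h" "finite J" "t \<in> J \<rightarrow> carrier S" "r \<in> J \<rightarrow> carrier R"
    and "(\<Oplus>\<^bsub>S\<^esub>j\<in>J. t j \<otimes>\<^bsub>S\<^esub> h (r j)) = \<zero>\<^bsub>S\<^esub>"
  shows "trivial_relation R S h J t (\<lambda>j x. r j)"
proof -
  define I where "I = lin_combs R J r"
  have I: "ideal I R" unfolding I_def by (rule R.lin_combs_ideal[OF assms(2,4)])
  have rI: "r ` J \<subseteq> I" unfolding I_def using R.lin_combs_generator[OF assms(2,4)] by blast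
  interpret I: module R "ideal_module R I" by (rule ideal_module_is_module[OF R.cring_axioms I])
  have "fcomb S r t J \<in> base_change_span S h (lin_rels R (ideal_module R I))"
    using flat_hom_tensor_rel_ideal[OF assms(1) I assms(2,3) rI assms(5)]
      tensor_rel_eq_base_change_span[OF I.module_axioms] by simp
  then obtain L0 u0 k where L0: "finite (L0::nat set)" "u0 \<in> L0 \<rightarrow> carrier S"
      "\<forall>l\<in>L0. k l \<in> lin_rels R (ideal_module R I)"
    and f: "fcomb S r t J = (\<lambda>x. \<Oplus>\<^bsub>S\<^esub>l\<in>L0. u0 l \<otimes>\<^bsub>S\<^esub> h (k l x))"
    unfolding base_change_span_def by blast
  have kR: "\<And>l x. l \<in> L0 \<Longrightarrow> k l x \<in> carrier R" using L0(3) I.lin_relsD(1) by blast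
  have "\<forall>x\<in>I. \<exists>c. c \<in> J \<rightarrow> carrier R \<and> (\<Oplus>j\<in>J. c j \<otimes> r j) = x"
    unfolding I_def lin_combs_def by blast
  then obtain c where c: "\<And>x. x \<in> I \<Longrightarrow> c x \<in> J \<rightarrow> carrier R" "\<And>x. x \<in> I \<Longrightarrow> (\<Oplus>j\<in>J. c x j \<otimes> r j) = x"
    by metis
  define B where "B = r ` J \<union> (\<Union>l\<in>L0. fsupp R (k l))"
  have kI: "finite (fsupp R (k l))" "fsupp R (k l) \<subseteq> I" if "l \<in> L0" for l
    using I.lin_relsD(3,4)[OF L0(3)[rule_format, OF that]] by (simp_all add: ideal_module_def)
  have B: "finite B" "B \<subseteq> I" "r ` J \<subseteq> B"
    using assms(2) L0(1) rI kI unfolding B_def by (auto, blast)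
  have BR: "B \<subseteq> carrier R" using B(2) ideal.Icarr[OF I] by blast
  have cR: "c x j \<in> carrier R" if "x \<in> B" "j \<in> J" for x j
    using c(1) B(2) that by blast
  define Q where "Q j = (\<Oplus>\<^bsub>S\<^esub>q\<in>J. t q \<otimes>\<^bsub>S\<^esub> h (c (r q) j))" for j
  have "trivial_relation R S h J Q (\<lambda>j x. r j)"
  proof (rule trivial_relationI[OF L0(1,2), where a = "\<lambda>j l. \<Oplus>x\<in>B. k l x \<otimes> c x j"])
    show "Q j = (\<Oplus>\<^bsub>S\<^esub>l\<in>L0. u0 l \<otimes>\<^bsub>S\<^esub> h (\<Oplus>x\<in>B. k l x \<otimes> c x j))" if "j \<in> J" for j
    proof -
      have "(\<Oplus>\<^bsub>S\<^esub>l\<in>L0. u0 l \<otimes>\<^bsub>S\<^esub> h (\<Oplus>x\<in>B. k l x \<otimes> c x j))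
          = (\<Oplus>\<^bsub>S\<^esub>x\<in>B. (\<Oplus>\<^bsub>S\<^esub>l\<in>L0. u0 l \<otimes>\<^bsub>S\<^esub> h (k l x)) \<otimes>\<^bsub>S\<^esub> h (c x j))"
        using that B L0 kR c(1) by (intro finsum_hom_recombine[symmetric]) (auto simp: Pi_def)
      also have "\<dots> = (\<Oplus>\<^bsub>S\<^esub>x\<in>B. fcomb S r t J x \<otimes>\<^bsub>S\<^esub> h (c x j))"
        by (simp add: f)
      also have "\<dots> = Q j"
        unfolding Q_def using that B assms(2,3) c(1) by (intro finsum_fcomb_mult) (auto simp: Pi_def)
      finally show ?thesis by simp
    qed
    show "(\<Oplus>j\<in>J. (\<Oplus>x\<in>B. k l x \<otimes> c x j) \<otimes> r j) = \<zero>" if "l \<in> L0" for l x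
    proof -
      have "(\<Oplus>j\<in>J. (\<Oplus>x\<in>B. k l x \<otimes> c x j) \<otimes> r j) = (\<Oplus>x\<in>B. k l x \<otimes> (\<Oplus>j\<in>J. c x j \<otimes> r j))"
        using that B assms(2,4) kR c(1) by (intro R.finsum_matrix_assoc) (auto simp: Pi_def)
      also have "\<dots> = (\<Oplus>x\<in>B. k l x \<otimes> x)"
        using B c(2) kR[OF that] BR by (intro R.finsum_cong') auto
      also have "\<dots> = \<zero>"
      proof (rule lin_rels_ideal_module_eval[OF R.cring_axioms I _ B(1,2)])
        show "k l \<in> lin_rels R (ideal_module R I)" using that L0(3) by blast
        show "fsupp R (k l) \<subseteq> B" using that unfolding B_def by blast
      qed
      finally show ?thesis .
    qed
  qed (use kR cR in \<open>auto intro!: R.finsum_closed\<close>)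
  moreover have "trivial_relation R S h J (\<lambda>j. t j \<ominus>\<^bsub>S\<^esub> Q j) (\<lambda>j x. r j)"
  proof (rule trivial_relationI[OF assms(2,3), where a = "\<lambda>j q. (if j = q then \<one> else \<zero>) \<ominus> c (r q) j"])
    show "t j \<ominus>\<^bsub>S\<^esub> Q j = (\<Oplus>\<^bsub>S\<^esub>q\<in>J. t q \<otimes>\<^bsub>S\<^esub> h ((if j = q then \<one> else \<zero>) \<ominus> c (r q) j))" if "j \<in> J" for j
    proof -
      have tS: "\<And>q. q \<in> J \<Longrightarrow> t q \<in> carrier S" and cS: "\<And>q. q \<in> J \<Longrightarrow> h (c (r q) j) \<in> carrier S"
        using assms(3) cR B(3) that by auto
      have "(\<Oplus>\<^bsub>S\<^esub>q\<in>J. t q \<otimes>\<^bsub>S\<^esub> h ((if j = q then \<one> else \<zero>) \<ominus> c (r q) j))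
          = (\<Oplus>\<^bsub>S\<^esub>q\<in>J. (if j = q then t q else \<zero>\<^bsub>S\<^esub>) \<oplus>\<^bsub>S\<^esub> \<ominus>\<^bsub>S\<^esub> (t q \<otimes>\<^bsub>S\<^esub> h (c (r q) j)))"
        using tS cS cR B(3) that by (intro S.finsum_cong') (auto simp: a_minus_def S.r_distr S.r_minus)
      also have "\<dots> = t j \<ominus>\<^bsub>S\<^esub> Q j"
        using assms(2,3) tS cS that
        by (simp add: S.finsum_addf S.finsum_singleton S.finsum_negf Q_def a_minus_def Pi_def)
      finally show ?thesis by simp
    qed
    show "(\<Oplus>j\<in>J. ((if j = q then \<one> else \<zero>) \<ominus> c (r q) j) \<otimes> r j) = \<zero>" if "q \<in> J" for q x
    proof -
      have rR: "\<And>j. j \<in> J \<Longrightarrow> r j \<in> carrier R" using assms(4) by auto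
      have "(\<Oplus>j\<in>J. ((if j = q then \<one> else \<zero>) \<ominus> c (r q) j) \<otimes> r j)
          = (\<Oplus>j\<in>J. (if j = q then r q else \<zero>) \<oplus> \<ominus> (c (r q) j \<otimes> r j))"
        using rR cR B(3) that by (intro R.finsum_cong') (auto simp: a_minus_def R.l_distr R.l_minus)
      also have "\<dots> = (\<Oplus>j\<in>J. if j = q then r q else \<zero>) \<oplus> (\<Oplus>j\<in>J. \<ominus> (c (r q) j \<otimes> r j))"
        using rR cR B(3) that by (intro R.finsum_addf) auto
      also have "\<dots> = r q \<ominus> (\<Oplus>j\<in>J. c (r q) j \<otimes> r j)"
      proof -
        have "r q \<in> B" using B(3) that by blast
        then have "(\<Oplus>j\<in>J. \<ominus> (c (r q) j \<otimes> r j)) = \<ominus> (\<Oplus>j\<in>J. c (r q) j \<otimes> r j)"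
          using assms(2) rR cR by (intro R.finsum_negf) auto
        then show ?thesis using assms(2) rR that by (simp add: R.finsum_delta a_minus_def)
      qed
      also have "\<dots> = \<zero>"
        using c(2) rI rR that by (auto simp: R.r_neg a_minus_def)
      finally show ?thesis .
    qed
  qed (use cR B(3) in auto)
  moreover have "t j = Q j \<oplus>\<^bsub>S\<^esub> (t j \<ominus>\<^bsub>S\<^esub> Q j)" if "j \<in> J" for j
  proof -
    have "Q j \<in> carrier S" "t j \<in> carrier S"
      unfolding Q_def using that assms(3) cR B(3) by (auto simp: Pi_def image_subset_iff intro!: S.finsum_closed)
    then show ?thesis by algebra
  qed
  ultimately show ?thesis by (rule trivial_relation_add)
qed

lemma flat_equational_criterion_family:
  assumes "flat_hom R S h" "finite B" "finite J" "t \<in> J \<rightarrow> carrier S"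
    and "\<And>j x. j \<in> J \<Longrightarrow> v j x \<in> carrier R" "\<And>j x. j \<in> J \<Longrightarrow> x \<notin> B \<Longrightarrow> v j x = \<zero>"
    and "\<And>x. (\<Oplus>\<^bsub>S\<^esub>j\<in>J. t j \<otimes>\<^bsub>S\<^esub> h (v j x)) = \<zero>\<^bsub>S\<^esub>"
  shows "trivial_relation R S h J t v"
  using assms(2-7)
proof (induction B arbitrary: J t v rule: finite_induct)
  case empty
  then show ?case by (intro trivial_relation_zero) auto
next
  case (insert x0 B)
  have "trivial_relation R S h J t (\<lambda>j x. v j x0)"
    using insert.prems by (intro flat_equational_criterion[OF assms(1)]) auto
  then obtain L1 u1 a1 where L1: "finite (L1::nat set)" "u1 \<in> L1 \<rightarrow> carrier S"
    "\<And>j l. j \<in> J \<Longrightarrow> l \<in> L1 \<Longrightarrow> a1 j l \<in> carrier R"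
    "\<And>j. j \<in> J \<Longrightarrow> t j = (\<Oplus>\<^bsub>S\<^esub>l\<in>L1. u1 l \<otimes>\<^bsub>S\<^esub> h (a1 j l))"
    "\<And>l. l \<in> L1 \<Longrightarrow> (\<Oplus>j\<in>J. a1 j l \<otimes> v j x0) = \<zero>"
    by (rule trivial_relationE) (rule that)
  let ?v = "\<lambda>l x. \<Oplus>j\<in>J. a1 j l \<otimes> v j x"
  have "trivial_relation R S h L1 u1 ?v"
  proof (rule insert.IH[OF L1(1,2)])
    show "?v l x \<in> carrier R" if "l \<in> L1" for l x
      using that L1(3) insert.prems(3) by (auto intro!: R.finsum_closed)
    show "?v l x = \<zero>" if "l \<in> L1" "x \<notin> B" for l x
    proof (cases "x = x0")
      case False
      then have "?v l x = (\<Oplus>j\<in>J. \<zero>)"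
        using that L1(3) insert.prems(4) by (intro R.finsum_cong') auto
      then show ?thesis by simp
    qed (use that L1(5) in simp)
    show "(\<Oplus>\<^bsub>S\<^esub>l\<in>L1. u1 l \<otimes>\<^bsub>S\<^esub> h (?v l x)) = \<zero>\<^bsub>S\<^esub>" for x
    proof -
      have "(\<Oplus>\<^bsub>S\<^esub>l\<in>L1. u1 l \<otimes>\<^bsub>S\<^esub> h (?v l x))
          = (\<Oplus>\<^bsub>S\<^esub>j\<in>J. (\<Oplus>\<^bsub>S\<^esub>l\<in>L1. u1 l \<otimes>\<^bsub>S\<^esub> h (a1 j l)) \<otimes>\<^bsub>S\<^esub> h (v j x))"
        using L1 insert.prems by (intro finsum_hom_recombine[symmetric]) auto
      also have "\<dots> = (\<Oplus>\<^bsub>S\<^esub>j\<in>J. t j \<otimes>\<^bsub>S\<^esub> h (v j x))"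
        using L1(4) insert.prems(2,3) by (intro S.finsum_cong') auto
      finally show ?thesis using insert.prems(5) by simp
    qed
  qed
  note c = trivial_relation_compose[OF insert.prems(1) L1(1-3) insert.prems(3) L1(4) this]
  show ?case by (rule c)
qed

lemma flat_tensor_rel_submodule:
  assumes "flat_hom R S h" "module R M" "submodule C R M"
    and "g \<in> free_on S (M\<lparr>carrier := C\<rparr>)" "g \<in> tensor_rel R S h M"
  shows "g \<in> tensor_rel R S h (M\<lparr>carrier := C\<rparr>)"
proof -
  interpret M: module R M by fact
  interpret C: submodule C R M by fact
  have C: "module R (M\<lparr>carrier := C\<rparr>)" by (rule C.submodule_is_module[OF assms(2)])
  from assms(5) obtain L0 u0 k where L0: "finite (L0::nat set)" "u0 \<in> L0 \<rightarrow> carrier S"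
      "\<And>l. l \<in> L0 \<Longrightarrow> k l \<in> lin_rels R M"
    and g: "g = (\<lambda>x. \<Oplus>\<^bsub>S\<^esub>l\<in>L0. u0 l \<otimes>\<^bsub>S\<^esub> h (k l x))"
    unfolding tensor_rel_eq_base_change_span[OF assms(2)] base_change_span_def by blast
  note k = M.lin_relsD[OF L0(3)]
  define B where "B = (\<Union>l\<in>L0. fsupp R (k l))"
  define v where "v l x = (if x \<in> C then \<zero> else k l x)" for l x
  have "trivial_relation R S h L0 u0 v"
  proof (rule flat_equational_criterion_family[OF assms(1) _ L0(1,2)])
    show "finite B" unfolding B_def using L0(1) k(3) by blast
    show "v l x \<in> carrier R" if "l \<in> L0" for l x
      using that k(1) by (simp add: v_def)
    show "v l x = \<zero>" if "l \<in> L0" "x \<notin> B" for l x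
      using that unfolding v_def B_def fsupp_def by auto
    show "(\<Oplus>\<^bsub>S\<^esub>l\<in>L0. u0 l \<otimes>\<^bsub>S\<^esub> h (v l x)) = \<zero>\<^bsub>S\<^esub>" for x
    proof (cases "x \<in> C")
      case True
      then have "(\<Oplus>\<^bsub>S\<^esub>l\<in>L0. u0 l \<otimes>\<^bsub>S\<^esub> h (v l x)) = (\<Oplus>\<^bsub>S\<^esub>l\<in>L0. \<zero>\<^bsub>S\<^esub>)"
        using L0(2) by (intro S.finsum_cong') (auto simp: v_def Pi_def)
      then show ?thesis by simp
    next
      case False
      then have "(\<Oplus>\<^bsub>S\<^esub>l\<in>L0. u0 l \<otimes>\<^bsub>S\<^esub> h (v l x)) = g x"
        unfolding g using L0(2) k(1) by (intro S.finsum_cong') (auto simp: v_def Pi_def)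
      then show ?thesis using False free_onD(2)[OF assms(4)] by simp
    qed
  qed
  then obtain L u a where L: "finite (L::nat set)" "u \<in> L \<rightarrow> carrier S"
    "\<And>l l'. l \<in> L0 \<Longrightarrow> l' \<in> L \<Longrightarrow> a l l' \<in> carrier R"
    "\<And>l. l \<in> L0 \<Longrightarrow> u0 l = (\<Oplus>\<^bsub>S\<^esub>l'\<in>L. u l' \<otimes>\<^bsub>S\<^esub> h (a l l'))"
    "\<And>l' x. l' \<in> L \<Longrightarrow> (\<Oplus>l\<in>L0. a l l' \<otimes> v l x) = \<zero>"
    by (rule trivial_relationE) (rule that)
  let ?k = "\<lambda>l' x. \<Oplus>l\<in>L0. a l l' \<otimes> k l x"
  have "?k l' \<in> lin_rels R (M\<lparr>carrier := C\<rparr>)" if "l' \<in> L" for l'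
  proof (rule C.lin_rels_submodule[OF assms(2)])
    show "?k l' \<in> lin_rels R M"
      using that L(3) L0 by (intro M.lin_rels_lincomb) auto
    show "?k l' x = \<zero>" if "x \<notin> C" for x
      using L(5)[OF \<open>l' \<in> L\<close>, of x] that by (simp add: v_def)
  qed
  moreover have "g = (\<lambda>x. \<Oplus>\<^bsub>S\<^esub>l'\<in>L. u l' \<otimes>\<^bsub>S\<^esub> h (?k l' x))"
  proof
    fix x
    have "g x = (\<Oplus>\<^bsub>S\<^esub>l\<in>L0. (\<Oplus>\<^bsub>S\<^esub>l'\<in>L. u l' \<otimes>\<^bsub>S\<^esub> h (a l l')) \<otimes>\<^bsub>S\<^esub> h (k l x))"
      unfolding g using L(2,3,4) L0(2) k(1) by (intro S.finsum_cong') (auto simp: Pi_def intro!: S.finsum_closed)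
    also have "\<dots> = (\<Oplus>\<^bsub>S\<^esub>l'\<in>L. u l' \<otimes>\<^bsub>S\<^esub> h (?k l' x))"
      using L L0(1) k(1) by (intro finsum_hom_recombine) auto
    finally show "g x = (\<Oplus>\<^bsub>S\<^esub>l'\<in>L. u l' \<otimes>\<^bsub>S\<^esub> h (?k l' x))" .
  qed
  ultimately have "g \<in> base_change_span S h (lin_rels R (M\<lparr>carrier := C\<rparr>))"
    unfolding base_change_span_def using L(1,2) by (intro CollectI exI[of _ L] exI[of _ u] exI[of _ ?k]) auto
  then show ?thesis by (simp add: tensor_rel_eq_base_change_span[OF C])
qed

lemma fadd_free_on:
  assumes "f \<in> free_on S N" "g \<in> free_on S N"
  shows "fadd S f g \<in> free_on S N"
proof -
  have "fsupp S (fadd S f g) \<subseteq> fsupp S f \<union> fsupp S g"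
    by (auto simp: fsupp_def fadd_def)
  then have "finite (fsupp S (fadd S f g))"
    using free_onD(3)[OF assms(1)] free_onD(3)[OF assms(2)] by (meson finite_UnI finite_subset)
  then show ?thesis
    using free_onD[OF assms(1)] free_onD[OF assms(2)] unfolding free_on_def by (simp add: fadd_def)
qed

lemma fcomb_mono_neutral:
  assumes "finite D'" "D \<subseteq> D'" "s \<in> D' \<rightarrow> carrier S" "\<And>d. d \<in> D' - D \<Longrightarrow> s d = \<zero>\<^bsub>S\<^esub>"
  shows "fcomb S p s D = fcomb S p s D'"
  unfolding fcomb_def using assms by (intro ext S.finsum_mono_neutral_left) (auto simp: fdelta_def)

lemma fcomb_finsum_coeff:
  assumes "finite D" "finite L" "u \<in> L \<rightarrow> carrier S" "\<And>l d. l \<in> L \<Longrightarrow> d \<in> D \<Longrightarrow> s l d \<in> carrier S"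
  shows "fcomb S p (\<lambda>d. \<Oplus>\<^bsub>S\<^esub>l\<in>L. u l \<otimes>\<^bsub>S\<^esub> s l d) D = (\<lambda>x. \<Oplus>\<^bsub>S\<^esub>l\<in>L. u l \<otimes>\<^bsub>S\<^esub> fcomb S p (s l) D x)"
proof
  fix x
  have "fcomb S p (\<lambda>d. \<Oplus>\<^bsub>S\<^esub>l\<in>L. u l \<otimes>\<^bsub>S\<^esub> s l d) D x = (\<Oplus>\<^bsub>S\<^esub>d\<in>D. \<Oplus>\<^bsub>S\<^esub>l\<in>L. u l \<otimes>\<^bsub>S\<^esub> fdelta S (p d) (s l d) x)"
  proof (unfold fcomb_def, rule S.finsum_cong')
    fix d assume d: "d \<in> D"
    show "fdelta S (p d) (\<Oplus>\<^bsub>S\<^esub>l\<in>L. u l \<otimes>\<^bsub>S\<^esub> s l d) x = (\<Oplus>\<^bsub>S\<^esub>l\<in>L. u l \<otimes>\<^bsub>S\<^esub> fdelta S (p d) (s l d) x)"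
    proof (cases "x = p d")
      case False
      then have "(\<Oplus>\<^bsub>S\<^esub>l\<in>L. u l \<otimes>\<^bsub>S\<^esub> fdelta S (p d) (s l d) x) = (\<Oplus>\<^bsub>S\<^esub>l\<in>L. \<zero>\<^bsub>S\<^esub>)"
        using assms(3) by (intro S.finsum_cong') (auto simp: fdelta_def Pi_def)
      then show ?thesis using False by (simp add: fdelta_def)
    qed (simp add: fdelta_def)
  qed (use assms in \<open>auto simp: Pi_def fdelta_def intro!: S.finsum_closed\<close>)
  also have "\<dots> = (\<Oplus>\<^bsub>S\<^esub>l\<in>L. u l \<otimes>\<^bsub>S\<^esub> fcomb S p (s l) D x)"
    unfolding fcomb_def using assms
    by (subst S.finsum_swap) (auto simp: Pi_def S.finsum_rdistr intro!: S.finsum_cong')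
  finally show "fcomb S p (\<lambda>d. \<Oplus>\<^bsub>S\<^esub>l\<in>L. u l \<otimes>\<^bsub>S\<^esub> s l d) D x = (\<Oplus>\<^bsub>S\<^esub>l\<in>L. u l \<otimes>\<^bsub>S\<^esub> fcomb S p (s l) D x)" .
qed

lemma tensor_eq_fcomb_split:
  assumes "finite D" "s \<in> D \<rightarrow> carrier S" "p1 ` D \<subseteq> carrier N" "p2 ` D \<subseteq> carrier N"
  shows "tensor_eq R S h N (fcomb S (\<lambda>d. p1 d \<oplus>\<^bsub>N\<^esub> p2 d) s D) (fadd S (fcomb S p1 s D) (fcomb S p2 s D))"
proof -
  have "tensor_eq R S h N (fcomb S (\<lambda>d. p1 d \<oplus>\<^bsub>N\<^esub> p2 d) s D)
      (\<lambda>x. \<Oplus>\<^bsub>S\<^esub>d\<in>D. fadd S (fdelta S (p1 d) (s d)) (fdelta S (p2 d) (s d)) x)"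
    unfolding fcomb_def using assms
    by (intro tensor_eq_finsum tensor_eq_fdelta_add) (auto simp: fadd_def Pi_def)
  moreover have "(\<lambda>x. \<Oplus>\<^bsub>S\<^esub>d\<in>D. fadd S (fdelta S (p1 d) (s d)) (fdelta S (p2 d) (s d)) x)
      = fadd S (fcomb S p1 s D) (fcomb S p2 s D)"
    unfolding fcomb_def fadd_def using assms by (intro ext S.finsum_addf) (auto simp: Pi_def)
  ultimately show ?thesis by simp
qed

lemma tensor_eq_fcomb_lincombs:
  assumes "module R M" "finite Y" "\<psi> ` Y \<subseteq> carrier M" "finite L" "u \<in> L \<rightarrow> carrier S"
    and "\<And>l y. l \<in> L \<Longrightarrow> k l y \<in> carrier R"
  shows "tensor_eq R S h M (fcomb S \<psi> (\<lambda>y. \<Oplus>\<^bsub>S\<^esub>l\<in>L. u l \<otimes>\<^bsub>S\<^esub> h (k l y)) Y)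
      (fcomb S (\<lambda>l. \<Oplus>\<^bsub>M\<^esub>y\<in>Y. k l y \<odot>\<^bsub>M\<^esub> \<psi> y) u L)"
proof -
  have "fcomb S \<psi> (\<lambda>y. \<Oplus>\<^bsub>S\<^esub>l\<in>L. u l \<otimes>\<^bsub>S\<^esub> h (k l y)) Y
      = (\<lambda>x. \<Oplus>\<^bsub>S\<^esub>l\<in>L. fsmult S (u l) (fcomb S \<psi> (\<lambda>y. h (k l y)) Y) x)"
    using assms(2,4-6) by (simp add: fcomb_finsum_coeff fsmult_def)
  moreover have "fcomb S (\<lambda>l. \<Oplus>\<^bsub>M\<^esub>y\<in>Y. k l y \<odot>\<^bsub>M\<^esub> \<psi> y) u L
      = (\<lambda>x. \<Oplus>\<^bsub>S\<^esub>l\<in>L. fsmult S (u l) (fdelta S (\<Oplus>\<^bsub>M\<^esub>y\<in>Y. k l y \<odot>\<^bsub>M\<^esub> \<psi> y) \<one>\<^bsub>S\<^esub>) x)"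
    unfolding fcomb_def fsmult_def using assms(5) by (intro ext S.finsum_cong') (auto simp: fdelta_def Pi_def)
  moreover have "tensor_eq R S h M (\<lambda>x. \<Oplus>\<^bsub>S\<^esub>l\<in>L. fsmult S (u l) (fcomb S \<psi> (\<lambda>y. h (k l y)) Y) x)
      (\<lambda>x. \<Oplus>\<^bsub>S\<^esub>l\<in>L. fsmult S (u l) (fdelta S (\<Oplus>\<^bsub>M\<^esub>y\<in>Y. k l y \<odot>\<^bsub>M\<^esub> \<psi> y) \<one>\<^bsub>S\<^esub>) x)"
    using assms by (intro tensor_eq_finsum tensor_eq_fsmult tensor_eq_fcomb_lincomb)
      (auto simp: fsmult_def Pi_def)
  ultimately show ?thesis by simp
qed

lemma tensor_rel_right_exact:
  assumes "module_hom_pair R M N \<phi>" "\<phi> ` carrier M = carrier N"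
    and "f \<in> free_on S M" "fpush S \<phi> f \<in> tensor_rel R S h N"
  shows "\<exists>g \<in> free_on S (M\<lparr>carrier := {x \<in> carrier M. \<phi> x = \<zero>\<^bsub>N\<^esub>}\<rparr>). tensor_eq R S h M f g"
proof -
  interpret \<phi>: module_hom_pair R M N \<phi> by fact
  let ?K = "{x \<in> carrier M. \<phi> x = \<zero>\<^bsub>N\<^esub>}"
  define \<psi> where "\<psi> = inv_into (carrier M) \<phi>"
  have \<psi>: "\<psi> y \<in> carrier M" "\<phi> (\<psi> y) = y" if "y \<in> carrier N" for y
    using that assms(2) unfolding \<psi>_def by (auto intro: inv_into_into f_inv_into_f)
  note f = free_onD[OF assms(3)]
  let ?X = "fsupp S f" and ?F = "fpush S \<phi> f"
  have F: "?F = fcomb S \<phi> f ?X" using f by (intro fpush_eq_fcomb)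
  obtain L u k where L: "finite (L::nat set)" "u \<in> L \<rightarrow> carrier S" "\<And>l. l \<in> L \<Longrightarrow> k l \<in> lin_rels R N"
    and Fk: "?F = (\<lambda>y. \<Oplus>\<^bsub>S\<^esub>l\<in>L. u l \<otimes>\<^bsub>S\<^esub> h (k l y))"
    using assms(4) unfolding tensor_rel_eq_base_change_span[OF \<phi>.N.module_axioms] base_change_span_def by blast
  note k = \<phi>.N.lin_relsD[OF L(3)]
  define Y where "Y = \<phi> ` ?X \<union> (\<Union>l\<in>L. fsupp R (k l))"
  have "finite Y" unfolding Y_def using f(3) L(1) k(3) by blast
  moreover have "Y \<subseteq> carrier N" unfolding Y_def using f(4) k(4) \<phi>.closed by blast
  moreover have "\<phi> ` ?X \<subseteq> Y" unfolding Y_def by blast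
  ultimately have Y: "finite Y" "Y \<subseteq> carrier N" "\<phi> ` ?X \<subseteq> Y" by blast+
  define z where "z l = (\<Oplus>\<^bsub>M\<^esub>y\<in>Y. k l y \<odot>\<^bsub>M\<^esub> \<psi> y)" for l
  define g where "g = fadd S (fcomb S (\<lambda>m. m \<ominus>\<^bsub>M\<^esub> \<psi> (\<phi> m)) f ?X) (fcomb S z u L)"
  have z: "z l \<in> ?K" if "l \<in> L" for l
  proof -
    have "\<phi> (z l) = (\<Oplus>\<^bsub>N\<^esub>y\<in>Y. \<phi> (k l y \<odot>\<^bsub>M\<^esub> \<psi> y))"
      unfolding z_def using Y k(1)[OF that] \<psi> by (intro \<phi>.finsum) auto
    also have "\<dots> = (\<Oplus>\<^bsub>N\<^esub>y\<in>Y. k l y \<odot>\<^bsub>N\<^esub> y)"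
      using Y k(1)[OF that] \<psi> by (intro \<phi>.N.finsum_cong') (auto simp: \<phi>.smult)
    also have "\<dots> = \<zero>\<^bsub>N\<^esub>"
      using that Y(1,2) L(3) unfolding Y_def by (intro \<phi>.N.lin_rels_eval) auto
    finally show ?thesis
      unfolding z_def using Y k(1)[OF that] \<psi> by (auto intro!: \<phi>.M.finsum_closed)
  qed
  have "g \<in> free_on S (M\<lparr>carrier := ?K\<rparr>)"
    unfolding g_def
  proof (intro fadd_free_on fcomb_free_on)
    have "m \<ominus>\<^bsub>M\<^esub> \<psi> (\<phi> m) \<in> ?K" if "m \<in> carrier M" for m
    proof -
      have "\<phi> (m \<ominus>\<^bsub>M\<^esub> \<psi> (\<phi> m)) = \<phi> m \<ominus>\<^bsub>N\<^esub> \<phi> m"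
        using that \<psi> by (simp add: \<phi>.minus)
      then show ?thesis using that \<psi> by (simp add: \<phi>.M.minus_closed a_minus_def \<phi>.N.r_neg)
    qed
    then show "(\<lambda>m. m \<ominus>\<^bsub>M\<^esub> \<psi> (\<phi> m)) ` ?X \<subseteq> carrier (M\<lparr>carrier := ?K\<rparr>)"
      using f(4) by auto
  qed (use f L z in auto)
  moreover have "tensor_eq R S h M f g"
  proof -
    have F_closed: "\<And>y. ?F y \<in> carrier S" using fpush_free_on[OF assms(3), of \<phi> N] free_onD(1) by auto
    have "fcomb S (\<lambda>m. \<psi> (\<phi> m)) f ?X = fpush S \<psi> ?F"
      unfolding F using f by (simp add: fpush_fcomb)
    also have "\<dots> = fcomb S \<psi> ?F Y"
    proof -
      have "fsupp S ?F \<subseteq> Y"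
      proof
        fix y assume y: "y \<in> fsupp S ?F"
        show "y \<in> Y"
        proof (rule ccontr)
          assume "y \<notin> Y"
          then have "y \<notin> \<phi> ` ?X" using Y(3) by blast
          then have "?F y = \<zero>\<^bsub>S\<^esub>" unfolding F using f(1,3) by (intro fcomb_outside) auto
          then show False using y by (simp add: fsupp_def)
        qed
      qed
      moreover have "fpush S \<psi> ?F = fcomb S \<psi> ?F (fsupp S ?F)"
        using F_closed free_onD(3)[OF fpush_free_on[OF assms(3), of \<phi> N]] by (intro fpush_eq_fcomb) auto
      moreover have "fcomb S \<psi> ?F (fsupp S ?F) = fcomb S \<psi> ?F Y"
        using \<open>fsupp S ?F \<subseteq> Y\<close> F_closed Y(1) by (intro fcomb_mono_neutral) (auto simp: fsupp_def)
      ultimately show ?thesis by simp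
    qed
    finally have B_eq: "fcomb S (\<lambda>m. \<psi> (\<phi> m)) f ?X = fcomb S \<psi> ?F Y" .
    have "tensor_eq R S h M (fcomb S \<psi> ?F Y) (fcomb S z u L)"
      unfolding Fk z_def using Y \<psi> L k(1) by (intro tensor_eq_fcomb_lincombs[OF \<phi>.M.module_axioms]) auto
    then have B: "tensor_eq R S h M (fcomb S (\<lambda>m. \<psi> (\<phi> m)) f ?X) (fcomb S z u L)"
      by (simp add: B_eq)
    have split: "(m \<ominus>\<^bsub>M\<^esub> \<psi> (\<phi> m)) \<oplus>\<^bsub>M\<^esub> \<psi> (\<phi> m) = m" if "m \<in> ?X" for m
      using that f(4) \<psi>[of "\<phi> m"] by (auto simp: a_minus_def \<phi>.M.a_assoc \<phi>.M.l_neg)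
    have "fcomb S (\<lambda>m. (m \<ominus>\<^bsub>M\<^esub> \<psi> (\<phi> m)) \<oplus>\<^bsub>M\<^esub> \<psi> (\<phi> m)) f ?X = fcomb S (\<lambda>m. m) f ?X"
      unfolding fcomb_def using split f(1) by (intro ext S.finsum_cong') auto
    then have f_eq: "f = fcomb S (\<lambda>m. (m \<ominus>\<^bsub>M\<^esub> \<psi> (\<phi> m)) \<oplus>\<^bsub>M\<^esub> \<psi> (\<phi> m)) f ?X"
      using fcomb_fsupp[OF f(1,3)] by simp
    have "tensor_eq R S h M (fcomb S (\<lambda>m. (m \<ominus>\<^bsub>M\<^esub> \<psi> (\<phi> m)) \<oplus>\<^bsub>M\<^esub> \<psi> (\<phi> m)) f ?X)
        (fadd S (fcomb S (\<lambda>m. m \<ominus>\<^bsub>M\<^esub> \<psi> (\<phi> m)) f ?X) (fcomb S (\<lambda>m. \<psi> (\<phi> m)) f ?X))"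
      using f(1,3,4) \<psi> by (intro tensor_eq_fcomb_split) (auto intro!: \<phi>.M.minus_closed)
    note A = this[folded f_eq]
    show ?thesis unfolding g_def
      by (rule tensor_eq_trans[OF A tensor_eq_fadd[OF tensor_eq_refl B]])
        (use f(1) L(2) in \<open>auto simp: fadd_def Pi_def\<close>)
  qed
  ultimately show ?thesis by blast
qed

lemma flat_tensor_rel_kernel:
  assumes "flat_hom R S h" "module_hom_pair R M P \<phi>"
    and "f \<in> free_on S M" "fpush S \<phi> f \<in> tensor_rel R S h P"
  shows "\<exists>g \<in> free_on S (M\<lparr>carrier := {x \<in> carrier M. \<phi> x = \<zero>\<^bsub>P\<^esub>}\<rparr>). tensor_eq R S h M f g"
proof -
  interpret \<phi>: module_hom_pair R M P \<phi> by fact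
  let ?N = "P\<lparr>carrier := \<phi> ` carrier M\<rparr>"
  have N: "module R ?N" by (rule submodule.submodule_is_module[OF \<phi>.image_submodule \<phi>.N.module_axioms])
  have hom: "module_hom_pair R M ?N \<phi>"
    by (rule module_hom_pair.intro[OF \<phi>.M.module_axioms N])
      (auto simp: module_hom_pair_axioms_def module_hom_def \<phi>.add \<phi>.smult)
  have "fpush S \<phi> f \<in> free_on S ?N"
    using assms(3) by (intro fpush_free_on) auto
  then have "fpush S \<phi> f \<in> tensor_rel R S h ?N"
    by (intro flat_tensor_rel_submodule[OF assms(1) \<phi>.N.module_axioms \<phi>.image_submodule _ assms(4)])
  then show ?thesis
    using tensor_rel_right_exact[OF hom _ assms(3)] by simp
qed

lemma tensor_eq_fpush_smult:
  assumes "module R M" "f \<in> free_on S M" "r \<in> carrier R"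
  shows "tensor_eq R S h M (fpush S (\<lambda>m. r \<odot>\<^bsub>M\<^esub> m) f) (fsmult S (h r) f)"
proof -
  interpret M: module R M by fact
  note f = free_onD[OF assms(2)]
  let ?X = "fsupp S f"
  have "tensor_eq R S h M (fcomb S (\<lambda>m. r \<odot>\<^bsub>M\<^esub> m) f ?X) (fcomb S (\<lambda>m. m) (\<lambda>m. f m \<otimes>\<^bsub>S\<^esub> h r) ?X)"
    unfolding fcomb_def using f assms(3) by (intro tensor_eq_finsum tensor_eq_fdelta_smult) auto
  moreover have "fcomb S (\<lambda>m. m) (\<lambda>m. f m \<otimes>\<^bsub>S\<^esub> h r) ?X = fsmult S (h r) f"
  proof
    fix x
    have "{d \<in> ?X. d = x} = (if x \<in> ?X then {x} else {})" by auto
    then show "fcomb S (\<lambda>m. m) (\<lambda>m. f m \<otimes>\<^bsub>S\<^esub> h r) ?X x = fsmult S (h r) f x"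
      using f assms(3) by (auto simp: fcomb_apply fsmult_def fsupp_def S.m_comm)
  qed
  ultimately show ?thesis using f by (simp add: fpush_eq_fcomb)
qed

lemma eps_injective_annihilator:
  assumes "flat_hom R S h" "module R M" "eps_injective R S h M K" "c \<in> K \<rightarrow> carrier R"
    and "f \<in> free_on S M" "\<And>i. i \<in> K \<Longrightarrow> fsmult S (h (c i)) f \<in> tensor_rel R S h M"
  shows "\<exists>g \<in> free_on S (M\<lparr>carrier := {m \<in> carrier M. \<forall>i\<in>K. c i \<odot>\<^bsub>M\<^esub> m = \<zero>\<^bsub>M\<^esub>}\<rparr>). tensor_eq R S h M f g"
proof -
  interpret M: module R M by fact
  define \<phi> where "\<phi> m = (\<lambda>i\<in>K. c i \<odot>\<^bsub>M\<^esub> m)" for m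
  have hom: "module_hom_pair R M (prod_module M K) \<phi>"
    using assms(4)
    by (intro module_hom_pair.intro[OF M.module_axioms prod_module_is_module[OF M.module_axioms]])
      (auto simp: module_hom_pair_axioms_def module_hom_def prod_module_def \<phi>_def Pi_def
        M.smult_r_distr M.smult_assoc1[symmetric] R.m_comm)
  note f = free_onD[OF assms(5)]
  let ?F = "fpush S \<phi> f"
  have F: "?F \<in> free_on S (prod_module M K)"
    using assms(5) module_hom_pair.closed[OF hom] by (intro fpush_free_on) auto
  have comp_rel: "push_comp S i ?F \<in> tensor_rel R S h M" if "i \<in> K" for i
  proof -
    have ci: "c i \<in> carrier R" using that assms(4) by auto
    have pc: "push_comp S i ?F = fpush S (\<lambda>m. c i \<odot>\<^bsub>M\<^esub> m) f"
      using f unfolding push_comp_def fpush_def[symmetric] by (simp add: fpush_fpush \<phi>_def that)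
    have closed: "fpush S (\<lambda>m. c i \<odot>\<^bsub>M\<^esub> m) f x \<in> carrier S" for x
      using free_onD(1)[OF fpush_free_on[OF assms(5), of "\<lambda>m. c i \<odot>\<^bsub>M\<^esub> m" M]] ci by auto
    have "tensor_eq R S h M (fpush S (\<lambda>m. c i \<odot>\<^bsub>M\<^esub> m) f) (fsmult S (h (c i)) f)"
      by (rule tensor_eq_fpush_smult[OF assms(2,5) ci])
    moreover have "tensor_eq R S h M (fsmult S (h (c i)) f) (\<lambda>x. \<zero>\<^bsub>S\<^esub>)"
      using tensor_eq_zero_iff[where f = "fsmult S (h (c i)) f" and N = M, OF tensor_rel_closed[OF assms(6)[OF that]]]
        assms(6)[OF that] by simp
    ultimately have "tensor_eq R S h M (fpush S (\<lambda>m. c i \<odot>\<^bsub>M\<^esub> m) f) (\<lambda>x. \<zero>\<^bsub>S\<^esub>)"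
      by (rule tensor_eq_trans) (use closed f(1) ci in \<open>auto simp: fsmult_def\<close>)
    then show ?thesis by (simp add: pc tensor_eq_zero_iff closed)
  qed
  have "\<forall>i\<in>K. tensor_eq R S h M (push_comp S i ?F) (push_comp S i (\<lambda>y. \<zero>\<^bsub>S\<^esub>))"
  proof
    fix i assume "i \<in> K"
    have "push_comp S i ?F m \<in> carrier S" for m
      unfolding push_comp_def using free_onD(1)[OF F] by (auto intro!: S.finsum_closed)
    moreover have zero: "push_comp S i (\<lambda>y. \<zero>\<^bsub>S\<^esub>) = (\<lambda>m. \<zero>\<^bsub>S\<^esub>)"
      by (simp add: push_comp_def fsupp_def)
    ultimately show "tensor_eq R S h M (push_comp S i ?F) (push_comp S i (\<lambda>y. \<zero>\<^bsub>S\<^esub>))"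
      unfolding zero using tensor_eq_zero_iff[where f = "push_comp S i ?F" and N = M] comp_rel[OF \<open>i \<in> K\<close>]
      by simp
  qed
  moreover have "(\<lambda>y. \<zero>\<^bsub>S\<^esub>) \<in> free_on S (prod_module M K)" by (simp add: free_on_def fsupp_def)
  ultimately have "tensor_eq R S h (prod_module M K) ?F (\<lambda>y. \<zero>\<^bsub>S\<^esub>)"
    using assms(3)[unfolded eps_injective_def, rule_format, OF F] by blast
  then have "?F \<in> tensor_rel R S h (prod_module M K)"
    using F by (simp add: tensor_eq_zero_iff free_onD)
  then obtain g where "g \<in> free_on S (M\<lparr>carrier := {x \<in> carrier M. \<phi> x = \<zero>\<^bsub>prod_module M K\<^esub>}\<rparr>)" "tensor_eq R S h M f g"
    using flat_tensor_rel_kernel[OF assms(1) hom assms(5)] by blast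
  moreover have "{x \<in> carrier M. \<phi> x = \<zero>\<^bsub>prod_module M K\<^esub>} = {m \<in> carrier M. \<forall>i\<in>K. c i \<odot>\<^bsub>M\<^esub> m = \<zero>\<^bsub>M\<^esub>}"
    by (auto simp: \<phi>_def prod_module_def restrict_def fun_eq_iff split: if_splits)
  ultimately show ?thesis by auto
qed

end

lemma (in ring) ideal_pow_ideal: "ideal I R \<Longrightarrow> ideal (ideal_pow R I n) R"
  by (induction n) (auto simp: oneideal ideal_prod_is_ideal)

lemma (in ring) ideal_pow_mono:
  assumes "ideal I R" "n \<le> m"
  shows "ideal_pow R I m \<subseteq> ideal_pow R I n"
  using assms(2)
proof (induction m)
  case (Suc m)
  have "ideal_pow R I (Suc m) \<subseteq> ideal_pow R I m"
    using ideal_prod_inter[OF assms(1) ideal_pow_ideal[OF assms(1)], of m] by auto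
  with Suc show ?case by (cases "n = Suc m") auto
qed simp

lemma (in ring_hom_cring) ideal_pow_hom:
  assumes "ideal I R" "x \<in> ideal_pow R I n"
  shows "h x \<in> ideal_pow S (genideal S (h ` I)) n"
  using assms(2)
proof (induction n arbitrary: x)
  case (Suc n)
  have hI: "h i \<in> genideal S (h ` I)" if "i \<in> I" for i
    using that S.genideal_self[of "h ` I"] ideal.Icarr[OF assms(1)] by auto
  from Suc.prems have "x \<in> ideal_prod R I (ideal_pow R I n)" by simp
  then have "h x \<in> ideal_prod S (genideal S (h ` I)) (ideal_pow S (genideal S (h ` I)) n)"
  proof (induction x rule: ideal_prod.induct)
    case (prod i j)
    then have "h (i \<otimes> j) = h i \<otimes>\<^bsub>S\<^esub> h j"
      using ideal.Icarr[OF assms(1)] ideal.Icarr[OF R.ideal_pow_ideal[OF assms(1)]] by simp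
    then show ?case using ideal_prod.prod[OF hI[OF prod(1)] Suc.IH[OF prod(2)]] by simp
  next
    case (sum s1 s2)
    then have "s1 \<in> carrier R" "s2 \<in> carrier R"
      using R.ideal_prod_in_carrier[OF assms(1) R.ideal_pow_ideal[OF assms(1)]] by auto
    then have "h (s1 \<oplus> s2) = h s1 \<oplus>\<^bsub>S\<^esub> h s2" by simp
    then show ?case using ideal_prod.sum[OF sum(3,4)] by simp
  qed
  then show ?case by simp
qed simp

lemma ideal_pow_generators:
  assumes "ring R" "ideal \<a> R" "infinite {n. \<exists>G. G \<subseteq> ideal_pow R \<a> n \<and> genideal R G = ideal_pow R \<a> n \<and> card_le G \<kappa>}"
  obtains n' c where "n \<le> n'" "c ` \<kappa> \<subseteq> carrier R" "genideal R (c ` \<kappa>) = ideal_pow R \<a> n'"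
proof -
  interpret R: ring R by fact
  obtain n' G where n': "n \<le> n'" "G \<subseteq> ideal_pow R \<a> n'" "genideal R G = ideal_pow R \<a> n'" "card_le G \<kappa>"
    using assms(3) unfolding infinite_nat_iff_unbounded_le by blast
  then obtain e where e: "inj_on e G" "e ` G \<subseteq> \<kappa>" unfolding card_le_def by blast
  define c where "c i = (if i \<in> e ` G then inv_into G e i else \<zero>\<^bsub>R\<^esub>)" for i
  have P: "ideal (ideal_pow R \<a> n') R" by (rule R.ideal_pow_ideal[OF assms(2)])
  have G_c: "G \<subseteq> c ` \<kappa>"
  proof
    fix g assume "g \<in> G"
    then have "c (e g) = g" "e g \<in> \<kappa>" using e by (auto simp: c_def)
    then show "g \<in> c ` \<kappa>" by (metis imageI)
  qed
  have c_P: "c ` \<kappa> \<subseteq> ideal_pow R \<a> n'"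
    using n'(2) inv_into_into[of _ e G] ideal.Icarr[OF P] additive_subgroup.zero_closed[OF ideal.axioms(1)[OF P]]
    by (auto simp: c_def)
  have "genideal R (c ` \<kappa>) = ideal_pow R \<a> n'"
  proof
    show "genideal R (c ` \<kappa>) \<subseteq> ideal_pow R \<a> n'" by (rule R.genideal_minimal[OF P c_P])
    show "ideal_pow R \<a> n' \<subseteq> genideal R (c ` \<kappa>)"
      using R.subset_Idl_subset[OF _ G_c] c_P ideal.Icarr[OF P] n'(3) by blast
  qed
  then show ?thesis using that n'(1) c_P ideal.Icarr[OF P] by blast
qed

context module begin

lemma annihilator_ideal:
  assumes "z \<in> carrier M"
  shows "ideal {r \<in> carrier R. r \<odot>\<^bsub>M\<^esub> z = \<zero>\<^bsub>M\<^esub>} R"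
proof (rule idealI[OF R.ring_axioms])
  show "subgroup {r \<in> carrier R. r \<odot>\<^bsub>M\<^esub> z = \<zero>\<^bsub>M\<^esub>} (add_monoid R)"
    using assms by (intro R.add.subgroupI) (auto simp: smult_l_minus smult_l_distr)
  show "x \<otimes> a \<in> {r \<in> carrier R. r \<odot>\<^bsub>M\<^esub> z = \<zero>\<^bsub>M\<^esub>}" "a \<otimes> x \<in> {r \<in> carrier R. r \<odot>\<^bsub>M\<^esub> z = \<zero>\<^bsub>M\<^esub>}"
    if "a \<in> {r \<in> carrier R. r \<odot>\<^bsub>M\<^esub> z = \<zero>\<^bsub>M\<^esub>}" "x \<in> carrier R" for a x
    using that assms by (auto simp: smult_assoc1 R.m_comm[of a x])
qed

lemma genideal_smult_zero:
  assumes "z \<in> carrier M" "A \<subseteq> carrier R" "\<And>a. a \<in> A \<Longrightarrow> a \<odot>\<^bsub>M\<^esub> z = \<zero>\<^bsub>M\<^esub>" "r \<in> genideal R A"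
  shows "r \<odot>\<^bsub>M\<^esub> z = \<zero>\<^bsub>M\<^esub>"
  using R.genideal_minimal[OF annihilator_ideal[OF assms(1)]] assms(2-4) by blast

lemma torsion_submodule:
  assumes "ideal \<a> R"
  shows "submodule (torsion R \<a> M) R M"
proof -
  have P: "\<And>n. ideal_pow R \<a> n \<subseteq> carrier R"
    using ideal.Icarr[OF R.ideal_pow_ideal[OF assms]] by blast
  have mono: "r \<odot>\<^bsub>M\<^esub> x = \<zero>\<^bsub>M\<^esub>" if "\<forall>r \<in> ideal_pow R \<a> n. r \<odot>\<^bsub>M\<^esub> x = \<zero>\<^bsub>M\<^esub>" "n \<le> m" "r \<in> ideal_pow R \<a> m" for r x n m
    using that R.ideal_pow_mono[OF assms] by blast
  have smult: "r \<odot>\<^bsub>M\<^esub> x \<in> torsion R \<a> M" if "r \<in> carrier R" "x \<in> torsion R \<a> M" for r x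
  proof -
    from that(2) obtain n where n: "x \<in> carrier M" "\<forall>s \<in> ideal_pow R \<a> n. s \<odot>\<^bsub>M\<^esub> x = \<zero>\<^bsub>M\<^esub>"
      unfolding torsion_def by blast
    have "s \<odot>\<^bsub>M\<^esub> (r \<odot>\<^bsub>M\<^esub> x) = \<zero>\<^bsub>M\<^esub>" if "s \<in> ideal_pow R \<a> n" for s
    proof -
      have s: "s \<in> carrier R" using that P by blast
      then have "s \<odot>\<^bsub>M\<^esub> (r \<odot>\<^bsub>M\<^esub> x) = r \<odot>\<^bsub>M\<^esub> (s \<odot>\<^bsub>M\<^esub> x)"
        using n(1) \<open>r \<in> carrier R\<close> by (simp add: smult_assoc1[symmetric] R.m_comm)
      then show ?thesis using n that \<open>r \<in> carrier R\<close> by simp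
    qed
    then show ?thesis unfolding torsion_def using n(1) \<open>r \<in> carrier R\<close> by blast
  qed
  show ?thesis
  proof (rule submoduleI)
    show "\<zero>\<^bsub>M\<^esub> \<in> torsion R \<a> M" unfolding torsion_def using P by (auto simp: subset_iff)
    show "\<ominus>\<^bsub>M\<^esub> x \<in> torsion R \<a> M" if "x \<in> torsion R \<a> M" for x
      using smult[OF _ that, of "\<ominus> \<one>"] that by (simp add: torsion_def smult_l_minus)
    show "x \<oplus>\<^bsub>M\<^esub> y \<in> torsion R \<a> M" if "x \<in> torsion R \<a> M" "y \<in> torsion R \<a> M" for x y
    proof -
      from that obtain n m where "x \<in> carrier M" "\<forall>r \<in> ideal_pow R \<a> n. r \<odot>\<^bsub>M\<^esub> x = \<zero>\<^bsub>M\<^esub>"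
        "y \<in> carrier M" "\<forall>r \<in> ideal_pow R \<a> m. r \<odot>\<^bsub>M\<^esub> y = \<zero>\<^bsub>M\<^esub>"
        unfolding torsion_def by blast
      then have "\<forall>r \<in> ideal_pow R \<a> (max n m). r \<odot>\<^bsub>M\<^esub> (x \<oplus>\<^bsub>M\<^esub> y) = \<zero>\<^bsub>M\<^esub>"
        using mono[of n x "max n m"] mono[of m y "max n m"] P[of "max n m"] by (auto simp: smult_r_distr subset_iff)
      then show ?thesis unfolding torsion_def using \<open>x \<in> carrier M\<close> \<open>y \<in> carrier M\<close> by blast
    qed
  qed (auto simp: smult, auto simp: torsion_def)
qed

end

lemma free_on_mono: "f \<in> free_on S (M\<lparr>carrier := A\<rparr>) \<Longrightarrow> A \<subseteq> B \<Longrightarrow> f \<in> free_on S (M\<lparr>carrier := B\<rparr>)"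
  by (auto simp: free_on_def)

theorem proposition8p5:
  fixes R :: "('r, 'a) ring_scheme" and S :: "('s, 'c) ring_scheme"
    and h :: "'r \<Rightarrow> 's" and \<a> :: "'r set"
    and M :: "('r, 'm) module" and \<kappa> :: "'i set"
  assumes "cring R" and "cring S" and "h \<in> ring_hom R S"
    and "flat_hom R S h"
    and "ideal \<a> R"
    and "infinite {n. \<exists>G. G \<subseteq> ideal_pow R \<a> n \<and> genideal R G = ideal_pow R \<a> n \<and> card_le G \<kappa>}"
    and "module R M"
    and "eps_injective R S h M \<kappa>"
  shows "(\<forall>g \<in> free_on S (M\<lparr>carrier := torsion R \<a> M\<rparr>).
            tensor_eq R S h M g (\<lambda>x. \<zero>\<^bsub>S\<^esub>) \<longrightarrow>
            tensor_eq R S h (M\<lparr>carrier := torsion R \<a> M\<rparr>) g (\<lambda>x. \<zero>\<^bsub>S\<^esub>))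
       \<and> (\<forall>f \<in> tensor_torsion R S h M (genideal S (h ` \<a>)).
            \<exists>g \<in> free_on S (M\<lparr>carrier := torsion R \<a> M\<rparr>). tensor_eq R S h M g f)"
proof -
  interpret ring_hom_cring R S h by (intro ring_hom_cring.intro ring_hom_cring_axioms.intro assms(1-3))
  interpret M: module R M by (rule assms(7))
  have T: "submodule (torsion R \<a> M) R M" by (rule M.torsion_submodule[OF assms(5)])
  show ?thesis
  proof (intro conjI ballI impI)
    fix g assume g: "g \<in> free_on S (M\<lparr>carrier := torsion R \<a> M\<rparr>)" "tensor_eq R S h M g (\<lambda>x. \<zero>\<^bsub>S\<^esub>)"
    then have "g \<in> tensor_rel R S h (M\<lparr>carrier := torsion R \<a> M\<rparr>)"
      using flat_tensor_rel_submodule[OF assms(4,7) T g(1)] free_onD(1)[OF g(1)] by (simp add: tensor_eq_zero_iff)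
    then show "tensor_eq R S h (M\<lparr>carrier := torsion R \<a> M\<rparr>) g (\<lambda>x. \<zero>\<^bsub>S\<^esub>)"
      using free_onD(1)[OF g(1)] by (simp add: tensor_eq_zero_iff)
  next
    fix f assume "f \<in> tensor_torsion R S h M (genideal S (h ` \<a>))"
    then obtain n where f: "f \<in> free_on S M"
      and n: "\<forall>s \<in> ideal_pow S (genideal S (h ` \<a>)) n. tensor_eq R S h M (fsmult S s f) (\<lambda>x. \<zero>\<^bsub>S\<^esub>)"
      unfolding tensor_torsion_def by blast
    obtain n' c where n': "n \<le> n'" "c ` \<kappa> \<subseteq> carrier R" "genideal R (c ` \<kappa>) = ideal_pow R \<a> n'"
      by (rule ideal_pow_generators[OF R.ring_axioms assms(5,6)])
    have "fsmult S (h (c i)) f \<in> tensor_rel R S h M" if "i \<in> \<kappa>" for i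
    proof -
      have "c i \<in> ideal_pow R \<a> n"
        using R.genideal_self[OF n'(2)] n'(3) R.ideal_pow_mono[OF assms(5) n'(1)] that by blast
      then have "h (c i) \<in> ideal_pow S (genideal S (h ` \<a>)) n" by (rule ideal_pow_hom[OF assms(5)])
      then show ?thesis
        using n free_onD(1)[OF f] n'(2) that tensor_eq_zero_iff[where f = "fsmult S (h (c i)) f" and N = M]
        by (auto simp: fsmult_def)
    qed
    then obtain g where g: "g \<in> free_on S (M\<lparr>carrier := {m \<in> carrier M. \<forall>i\<in>\<kappa>. c i \<odot>\<^bsub>M\<^esub> m = \<zero>\<^bsub>M\<^esub>}\<rparr>)"
        "tensor_eq R S h M f g"
      using eps_injective_annihilator[OF assms(4,7,8) _ f] n'(2) by blast
    have "{m \<in> carrier M. \<forall>i\<in>\<kappa>. c i \<odot>\<^bsub>M\<^esub> m = \<zero>\<^bsub>M\<^esub>} \<subseteq> torsion R \<a> M"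
      using M.genideal_smult_zero[OF _ n'(2)] n'(3) unfolding torsion_def by blast
    then show "\<exists>g \<in> free_on S (M\<lparr>carrier := torsion R \<a> M\<rparr>). tensor_eq R S h M g f"
      using g free_on_mono free_onD(1)[OF f] free_onD(1)[OF g(1)] by (blast intro: tensor_eq_sym)
  qed
qed

end
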